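(* Let $X$ be a compact Hausdorff space, $N\ge1$, and $\phi_1,\dots,\phi_m$ real-valued continuous functions on $X$. For $d\ge1$ let $\mathcal C(X,d,\boldsymbol\phi)$ be the set of $d\times d$ matrix-valued Borel measures $\mu$ on $X$ with $\mu(\Delta)\ge0$ for all Borel $\Delta$, $\mu(X)=I_d$, and $\int_X\phi_r\,d\mu=0$ for $r=1,\dots,m$. Suppose the positive $N\times N$ matrix measure $\mu$ has the form $\mu=\sum_{k=1}^N\mu_kP_k$, where $P_1,\dots,P_N$ are pairwise orthogonal rank-one orthogonal projections on $\mathbb C^N$ with $\sum_{k=1}^NP_k=I_N$, and $\mu_1,\dots,\mu_N$ are scalar measures (not necessarily distinct and not necessarily with disjoint supports) each of which is an extreme point of $\mathcal C(X,1,\boldsymbol\phi)$. Then $\mu$ is an extreme point of $\mathcal C(X,N,\boldsymbol\phi)$. *)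

theory Defs
  imports "HOL-Analysis.Analysis" "HOL-Library.Numeral_Type"
begin

definition qform :: "complex^'n \<Rightarrow> complex^'n^'n \<Rightarrow> complex" where
  "qform v A = (\<Sum>i\<in>UNIV. cnj (v$i) * (A *v v)$i)"

definition psd_mat :: "complex^'n^'n \<Rightarrow> bool" where
  "psd_mat A \<longleftrightarrow> (\<forall>v. qform v A \<in> \<real> \<and> 0 \<le> Re (qform v A))"

definition cmat_scale :: "complex \<Rightarrow> complex^'n^'m \<Rightarrow> complex^'n^'m" where
  "cmat_scale c A = (\<chi> i j. c * A$i$j)"

definition adjoint_mat :: "complex^'n^'m \<Rightarrow> complex^'m^'n" where
  "adjoint_mat A = (\<chi> i j. cnj (A$j$i))"

definition rank_one_orth_proj :: "complex^'n^'n \<Rightarrow> bool" where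
  "rank_one_orth_proj P \<longleftrightarrow> adjoint_mat P = P \<and> P ** P = P \<and> rank P = 1"

text \<open>A d x d matrix-valued Borel measure on the space 'a: a countably additive
  map from the Borel sets to matrices (taken to be 0 on non-Borel sets, so that
  such measures are determined by their values on Borel sets).\<close>
definition matrix_measure :: "('a::topological_space set \<Rightarrow> complex^'n^'n) \<Rightarrow> bool" where
  "matrix_measure \<mu> \<longleftrightarrow>
     (\<forall>A. A \<notin> sets borel \<longrightarrow> \<mu> A = 0) \<and>
     (\<forall>A::nat \<Rightarrow> 'a set. range A \<subseteq> sets borel \<longrightarrow> disjoint_family A \<longrightarrow>
        (\<lambda>n. \<mu> (A n)) sums \<mu> (\<Union>n. A n))"

definition qmeasure :: "('a::topological_space set \<Rightarrow> complex^'n^'n) \<Rightarrow> complex^'n \<Rightarrow> 'a measure" where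
  "qmeasure \<mu> v = measure_of UNIV (sets borel) (\<lambda>A. ennreal (Re (qform v (\<mu> A))))"

text \<open>Integral of a real function against a positive matrix measure, computed
  entrywise; the (i,j) entry (a complex measure) is recovered from the positive
  scalar measures v* mu v by polarization:
  mu_ij = 1/4 sum_{k=0..3} conj(i^k) (e_i + i^k e_j)* mu (e_i + i^k e_j).\<close>
definition mat_integral :: "('a::topological_space set \<Rightarrow> complex^'n^'n) \<Rightarrow> ('a \<Rightarrow> real) \<Rightarrow> complex^'n^'n" where
  "mat_integral \<mu> f = (\<chi> i j. (1/4) * (\<Sum>k<(4::nat).
      cnj (\<i>^k) * complex_of_real (integral\<^sup>L (qmeasure \<mu> (axis i 1 + axis j (\<i>^k))) f)))"

text \<open>The set C(X,d,phi) (with d = CARD('n)).\<close>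
definition Cset :: "nat \<Rightarrow> (nat \<Rightarrow> 'a::topological_space \<Rightarrow> real) \<Rightarrow> ('a set \<Rightarrow> complex^'n^'n) set" where
  "Cset m \<phi> = {\<mu>. matrix_measure \<mu> \<and> (\<forall>A\<in>sets borel. psd_mat (\<mu> A)) \<and>
      \<mu> UNIV = mat 1 \<and> (\<forall>r\<in>{1..m}. mat_integral \<mu> (\<phi> r) = 0)}"

definition extreme_point_mm :: "('a set \<Rightarrow> complex^'n^'n) \<Rightarrow> ('a set \<Rightarrow> complex^'n^'n) set \<Rightarrow> bool" where
  "extreme_point_mm \<mu> S \<longleftrightarrow> \<mu> \<in> S \<and>
     (\<forall>\<nu>1\<in>S. \<forall>\<nu>2\<in>S. \<forall>t::real. 0 < t \<and> t < 1 \<and> \<mu> = (\<lambda>A. t *\<^sub>R \<nu>1 A + (1 - t) *\<^sub>R \<nu>2 A)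
        \<longrightarrow> \<nu>1 = \<nu>2)"

end

theory Submission
  imports Defs
begin

text \<open>Write \<open>P\<^sub>k = u\<^sub>k u\<^sub>k\<^sup>*\<close> for an orthonormal basis \<open>u\<close> and suppose
  \<open>\<mu> = t \<nu>\<^sub>1 + (1 - t) \<nu>\<^sub>2\<close> inside the moment class. Each diagonal entry \<open>u\<^sub>k\<^sup>* \<nu>\<^sub>i u\<^sub>k\<close>
  lies in the scalar moment class and these entries average to the extreme point \<open>\<mu>\<^sub>k\<close>, so they
  equal \<open>\<mu>\<^sub>k\<close>.

  An extreme point of the scalar class is a sum of at most \<open>m + 1\<close> atoms: on more than \<open>m + 1\<close>
  disjoint sets of positive mass some nonzero step density is annihilated by the \<open>m + 1\<close> linear
  constraints (total mass and moments), and the measure could be perturbed along it in both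
  directions. For \<open>j \<noteq> k\<close> and \<open>|\<gamma>| = 1\<close> the scalar measure
  \<open>(u\<^sub>j + \<gamma> u\<^sub>k)\<^sup>* \<nu>\<^sub>1 (u\<^sub>j + \<gamma> u\<^sub>k)\<close> equals \<open>\<mu>\<^sub>j + \<mu>\<^sub>k + 2 Re (\<gamma> u\<^sub>j\<^sup>* \<nu>\<^sub>1 u\<^sub>k)\<close> and has
  vanishing moments. Positivity of \<open>\<nu>\<^sub>1\<close> makes the cross term vanish on \<open>\<mu>\<^sub>j\<close>-null sets, so it
  is a step density on the atoms of \<open>\<mu>\<^sub>j\<close> satisfying the constraints, and extremality of \<open>\<mu>\<^sub>j\<close>
  forces it to vanish. Hence \<open>\<nu>\<^sub>1 = \<mu>\<close>.\<close>

section \<open>Finite Borel measures as real set functions\<close>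

text \<open>Finite positive Borel measures are handled as real-valued set functions, so that signed
  combinations of them can be formed; only their values on Borel sets matter.\<close>

definition real_borel_additive :: "('a::topological_space set \<Rightarrow> real) \<Rightarrow> bool" where
  "real_borel_additive \<nu> \<longleftrightarrow> (\<forall>F::nat \<Rightarrow> 'a set. range F \<subseteq> sets borel \<longrightarrow> disjoint_family F \<longrightarrow>
      (\<lambda>n. \<nu> (F n)) sums \<nu> (\<Union>n. F n))"

definition real_borel_measure :: "('a::topological_space set \<Rightarrow> real) \<Rightarrow> bool" where
  "real_borel_measure \<nu> \<longleftrightarrow> (\<forall>A\<in>sets borel. 0 \<le> \<nu> A) \<and> real_borel_additive \<nu>"

definition measure_of_real :: "('a::topological_space set \<Rightarrow> real) \<Rightarrow> 'a measure" where
  "measure_of_real \<nu> = measure_of UNIV (sets borel) (\<lambda>A. ennreal (\<nu> A))"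

lemma real_borel_additive_empty:
  assumes "real_borel_additive \<nu>"
  shows "\<nu> {} = 0"
proof -
  have "(\<lambda>n. \<nu> {}) sums \<nu> (\<Union>n::nat. {})"
    using assms unfolding real_borel_additive_def by (auto simp: disjoint_family_on_def)
  then have "(\<lambda>n::nat. \<nu> {}) \<longlonglongrightarrow> 0"
    by (intro summable_LIMSEQ_zero sums_summable)
  then show ?thesis
    using LIMSEQ_const_iff by blast
qed

lemma real_borel_measure_empty: "real_borel_measure \<nu> \<Longrightarrow> \<nu> {} = 0"
  by (simp add: real_borel_measure_def real_borel_additive_empty)

lemma real_borel_measure_nonneg: "real_borel_measure \<nu> \<Longrightarrow> A \<in> sets borel \<Longrightarrow> 0 \<le> \<nu> A"
  by (simp add: real_borel_measure_def)

lemma real_borel_additive_add: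
  "real_borel_additive \<nu> \<Longrightarrow> real_borel_additive \<nu>' \<Longrightarrow> real_borel_additive (\<lambda>A. \<nu> A + \<nu>' A)"
  unfolding real_borel_additive_def by (auto intro!: sums_add)

lemma real_borel_additive_sum:
  "(\<And>i. i \<in> I \<Longrightarrow> real_borel_additive (\<nu> i)) \<Longrightarrow> real_borel_additive (\<lambda>A. \<Sum>i\<in>I. c i * \<nu> i A)"
  unfolding real_borel_additive_def by (auto intro!: sums_sum sums_mult)

lemma real_borel_additive_restrict:
  assumes "real_borel_additive \<nu>" and "E \<in> sets borel"
  shows "real_borel_additive (\<lambda>A. \<nu> (A \<inter> E))"
  unfolding real_borel_additive_def
proof safe
  fix F :: "nat \<Rightarrow> 'a set"
  assume F: "range F \<subseteq> sets borel" "disjoint_family F"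
  then have "range (\<lambda>n. F n \<inter> E) \<subseteq> sets borel" "disjoint_family (\<lambda>n. F n \<inter> E)"
    using assms(2) by (auto simp: disjoint_family_on_def)
  then have "(\<lambda>n. \<nu> (F n \<inter> E)) sums \<nu> (\<Union>n. F n \<inter> E)"
    using assms(1) unfolding real_borel_additive_def by blast
  then show "(\<lambda>n. \<nu> (F n \<inter> E)) sums \<nu> ((\<Union>n. F n) \<inter> E)"
    by (simp add: Int_UN_distrib2)
qed

lemma real_borel_measure_restrict:
  "real_borel_measure \<nu> \<Longrightarrow> E \<in> sets borel \<Longrightarrow> real_borel_measure (\<lambda>A. \<nu> (A \<inter> E))"
  by (auto simp: real_borel_measure_def intro: real_borel_additive_restrict)

lemma real_borel_measure_add:
  "real_borel_measure \<nu> \<Longrightarrow> real_borel_measure \<nu>' \<Longrightarrow> real_borel_measure (\<lambda>A. \<nu> A + \<nu>' A)"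
  by (auto simp: real_borel_measure_def intro: real_borel_additive_add)

lemma sets_measure_of_real [simp]: "sets (measure_of_real \<nu>) = sets borel"
  and space_measure_of_real [simp]: "space (measure_of_real \<nu>) = UNIV"
  unfolding measure_of_real_def using sets.sigma_sets_eq[of borel]
  by (simp_all add: sets_measure_of_conv space_measure_of_conv sets.space_closed)

lemma emeasure_measure_of_real:
  assumes "real_borel_measure \<nu>" and "A \<in> sets borel"
  shows "emeasure (measure_of_real \<nu>) A = ennreal (\<nu> A)"
  unfolding measure_of_real_def
proof (rule emeasure_measure_of_sigma)
  show "sigma_algebra UNIV (sets borel)"
    using sets.sigma_algebra_axioms[of borel] by simp
  show "positive (sets borel) (\<lambda>A. ennreal (\<nu> A))"
    using real_borel_measure_empty[OF assms(1)] by (simp add: positive_def)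
  show "countably_additive (sets borel) (\<lambda>A. ennreal (\<nu> A))"
    unfolding countably_additive_def
  proof safe
    fix F :: "nat \<Rightarrow> 'a set"
    assume F: "range F \<subseteq> sets borel" "disjoint_family F"
    then have sums: "(\<lambda>n. \<nu> (F n)) sums \<nu> (\<Union>n. F n)" and nonneg: "\<And>n. 0 \<le> \<nu> (F n)"
      using assms(1) by (auto simp: real_borel_measure_def real_borel_additive_def)
    show "(\<Sum>n. ennreal (\<nu> (F n))) = ennreal (\<nu> (\<Union>n. F n))"
      using suminf_ennreal2[OF nonneg sums_summable[OF sums]] sums_unique[OF sums] by simp
  qed
qed (use assms in auto)

lemma finite_measure_measure_of_real:
  "real_borel_measure \<nu> \<Longrightarrow> finite_measure (measure_of_real \<nu>)"
  by (rule finite_measureI) (simp add: emeasure_measure_of_real)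

lemma measure_measure_of_real:
  "real_borel_measure \<nu> \<Longrightarrow> A \<in> sets borel \<Longrightarrow> measure (measure_of_real \<nu>) A = \<nu> A"
  by (simp add: measure_def emeasure_measure_of_real real_borel_measure_nonneg)

lemma real_borel_measure_mono:
  assumes "real_borel_measure \<nu>" "A \<subseteq> B" "A \<in> sets borel" "B \<in> sets borel"
  shows "\<nu> A \<le> \<nu> B"
  using finite_measure.finite_measure_mono[OF finite_measure_measure_of_real[OF assms(1)], of A B] assms
  by (simp add: measure_measure_of_real)

lemma real_borel_measure_Un:
  assumes "real_borel_measure \<nu>" "A \<in> sets borel" "B \<in> sets borel" "A \<inter> B = {}"
  shows "\<nu> (A \<union> B) = \<nu> A + \<nu> B"
  using measure_Union[of "measure_of_real \<nu>" A B] assms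
  by (simp add: measure_measure_of_real emeasure_measure_of_real)

lemma real_borel_measure_Diff:
  assumes "real_borel_measure \<nu>" "A \<subseteq> B" "A \<in> sets borel" "B \<in> sets borel"
  shows "\<nu> (B - A) = \<nu> B - \<nu> A"
proof -
  have "\<nu> B = \<nu> A + \<nu> (B - A)"
    using real_borel_measure_Un[OF assms(1), of A "B - A"] assms by (simp add: Un_absorb1)
  then show ?thesis by simp
qed

lemma abs_step_measure_le:
  assumes \<nu>: "real_borel_measure \<nu>" and \<E>: "\<E> \<subseteq> sets borel" and A: "A \<in> sets borel"
  shows "\<bar>\<Sum>E\<in>\<E>. a E * \<nu> (A \<inter> E)\<bar> \<le> (\<Sum>E\<in>\<E>. \<bar>a E\<bar>) * \<nu> A"
  unfolding sum_distrib_right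
proof (rule order_trans[OF sum_abs sum_mono])
  fix E
  assume "E \<in> \<E>"
  then have "0 \<le> \<nu> (A \<inter> E)" "\<nu> (A \<inter> E) \<le> \<nu> A"
    using \<E> A \<nu> by (auto intro!: real_borel_measure_nonneg real_borel_measure_mono)
  then show "\<bar>a E * \<nu> (A \<inter> E)\<bar> \<le> \<bar>a E\<bar> * \<nu> A"
    by (simp add: abs_mult mult_left_mono)
qed

lemma step_measure_member:
  assumes "real_borel_measure \<nu>" and "disjoint \<E>" and "finite \<E>" and "E0 \<in> \<E>"
  shows "(\<Sum>E\<in>\<E>. a E * \<nu> (E0 \<inter> E)) = a E0 * \<nu> E0"
proof -
  have "E0 \<inter> E = {}" if "E \<in> \<E> - {E0}" for E
    using assms(2,4) that by (auto simp: pairwise_def disjnt_def)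
  then show ?thesis
    using assms real_borel_measure_empty[OF assms(1)] by (simp add: sum.remove)
qed

lemma additive_borel_UN:
  fixes h :: "'a::topological_space set \<Rightarrow> 'b::ab_group_add"
  assumes h: "additive (sets borel) h" and "finite S"
    and "\<And>i. i \<in> S \<Longrightarrow> B i \<in> sets borel" and "disjoint_family_on B S"
  shows "h (\<Union>i\<in>S. B i) = (\<Sum>i\<in>S. h (B i))"
  using assms(2-4)
proof (induction S rule: finite_induct)
  case empty
  have "h ({} \<union> {}) = h {} + h {}"
    using h by (intro additiveD) auto
  then show ?case by simp
next
  case (insert i S)
  have "(\<Union>j\<in>S. B j) \<in> sets borel" "B i \<inter> (\<Union>j\<in>S. B j) = {}"
    using insert.hyps insert.prems by (auto simp: disjoint_family_on_def)
  then have "h (B i \<union> (\<Union>j\<in>S. B j)) = h (B i) + h (\<Union>j\<in>S. B j)"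
    using h insert.prems by (intro additiveD) auto
  with insert show ?case
    by (simp add: disjoint_family_on_def)
qed

lemma sum_nn_integral_SUP:
  fixes N :: "'j \<Rightarrow> 'a measure" and c :: "'j \<Rightarrow> ennreal"
  assumes inc: "incseq U" and U: "\<And>i j. j \<in> J \<Longrightarrow> U i \<in> borel_measurable (N j)"
  shows "(\<Sum>j\<in>J. c j * nn_integral (N j) (SUP i. U i)) = (SUP i. \<Sum>j\<in>J. c j * nn_integral (N j) (U i))"
proof -
  have "(SUP i. U i) = (\<lambda>x. SUP i. U i x)"
    by (rule ext) (simp add: image_image)
  then have "nn_integral (N j) (SUP i. U i) = (SUP i. nn_integral (N j) (U i))" if "j \<in> J" for j
    using nn_integral_monotone_convergence_SUP[OF inc U[OF that]] by simp
  then have "(\<Sum>j\<in>J. c j * nn_integral (N j) (SUP i. U i))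
      = (\<Sum>j\<in>J. SUP i. c j * nn_integral (N j) (U i))"
    by (simp add: SUP_mult_left_ennreal)
  also have "\<dots> = (SUP i. \<Sum>j\<in>J. c j * nn_integral (N j) (U i))"
  proof (rule ennreal_SUP_sum[symmetric])
    have "incseq (\<lambda>i. nn_integral (N j) (U i))" for j
      using inc by (intro monoI nn_integral_mono) (auto simp: incseq_def le_fun_def)
    then show "\<And>j. j \<in> J \<Longrightarrow> incseq (\<lambda>i. c j * nn_integral (N j) (U i))"
      by (auto simp: incseq_def mult_left_mono)
  qed
  finally show ?thesis .
qed

lemma nn_integral_lincomb_eqI:
  fixes N :: "'j \<Rightarrow> 'a::topological_space measure" and a b :: "'j \<Rightarrow> ennreal"
  assumes J: "finite J" and sets: "\<And>j. j \<in> J \<Longrightarrow> sets (N j) = sets borel"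
    and eq: "\<And>A. A \<in> sets borel \<Longrightarrow>
      (\<Sum>j\<in>J. a j * emeasure (N j) A) = (\<Sum>j\<in>J. b j * emeasure (N j) A)"
    and f: "f \<in> borel_measurable borel"
  shows "(\<Sum>j\<in>J. a j * nn_integral (N j) f) = (\<Sum>j\<in>J. b j * nn_integral (N j) f)"
  using f
proof induct
  case (cong f g)
  then have "f = g" by auto
  then show ?case using cong by simp
next
  case (set A)
  have "\<And>j. j \<in> J \<Longrightarrow> nn_integral (N j) (indicator A) = emeasure (N j) A"
    using sets set by (intro nn_integral_indicator) auto
  then show ?case using eq[OF set] by simp
next
  case (mult u c)
  have "\<And>j. j \<in> J \<Longrightarrow> nn_integral (N j) (\<lambda>x. c * u x) = c * nn_integral (N j) u"
    using sets mult by (intro nn_integral_cmult) (auto cong: measurable_cong_sets)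
  then have "(\<Sum>j\<in>J. a j * nn_integral (N j) (\<lambda>x. c * u x)) = c * (\<Sum>j\<in>J. a j * nn_integral (N j) u)"
     "(\<Sum>j\<in>J. b j * nn_integral (N j) (\<lambda>x. c * u x)) = c * (\<Sum>j\<in>J. b j * nn_integral (N j) u)"
    by (auto simp: sum_distrib_left mult_ac intro!: sum.cong)
  then show ?case using mult by simp
next
  case (add u v)
  have "\<And>j. j \<in> J \<Longrightarrow> nn_integral (N j) (\<lambda>x. v x + u x) = nn_integral (N j) v + nn_integral (N j) u"
    using sets add by (intro nn_integral_add) (auto cong: measurable_cong_sets)
  then show ?case using add by (simp add: distrib_left sum.distrib)
next
  case (seq U)
  have "\<And>i j. j \<in> J \<Longrightarrow> U i \<in> borel_measurable (N j)"
    using sets seq by (auto cong: measurable_cong_sets)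
  from sum_nn_integral_SUP[OF seq(4) this, where c=a] sum_nn_integral_SUP[OF seq(4) this, where c=b]
  show ?case by (simp only: seq(3))
qed

lemma sum_ennreal_mult:
  assumes "\<And>j. j \<in> J \<Longrightarrow> 0 \<le> a j \<and> 0 \<le> x j"
  shows "(\<Sum>j\<in>J. ennreal (a j) * ennreal (x j)) = ennreal (\<Sum>j\<in>J. a j * x j)"
proof -
  have "(\<Sum>j\<in>J. ennreal (a j) * ennreal (x j)) = (\<Sum>j\<in>J. ennreal (a j * x j))"
    using assms by (intro sum.cong) (auto simp: ennreal_mult)
  also have "\<dots> = ennreal (\<Sum>j\<in>J. a j * x j)"
    using assms by (intro sum_ennreal) auto
  finally show ?thesis .
qed

lemma integral_lincomb_eqI_nonneg:
  fixes N :: "'j \<Rightarrow> 'a::topological_space measure" and a b :: "'j \<Rightarrow> real"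
  assumes J: "finite J" and sets: "\<And>j. j \<in> J \<Longrightarrow> sets (N j) = sets borel"
    and finite: "\<And>j. j \<in> J \<Longrightarrow> finite_measure (N j)"
    and nonneg: "\<And>j. j \<in> J \<Longrightarrow> 0 \<le> a j \<and> 0 \<le> b j"
    and eq: "\<And>A. A \<in> sets borel \<Longrightarrow>
      (\<Sum>j\<in>J. a j * measure (N j) A) = (\<Sum>j\<in>J. b j * measure (N j) A)"
    and f: "f \<in> borel_measurable borel" and bound: "\<And>x. 0 \<le> f x \<and> f x \<le> B"
  shows "(\<Sum>j\<in>J. a j * integral\<^sup>L (N j) f) = (\<Sum>j\<in>J. b j * integral\<^sup>L (N j) f)"
proof -
  have nn: "(\<integral>\<^sup>+x. ennreal (f x) \<partial>N j) = ennreal (integral\<^sup>L (N j) f)" if "j \<in> J" for j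
    using f bound that sets finite
    by (intro nn_integral_eq_integral finite_measure.integrable_const_bound[where B=B])
      (auto cong: measurable_cong_sets)
  have int_nonneg: "0 \<le> integral\<^sup>L (N j) f" for j
    using bound by (simp add: integral_nonneg)
  have em: "emeasure (N j) A = ennreal (measure (N j) A)" if "j \<in> J" for j A
    using finite that by (intro finite_measure.emeasure_eq_measure) auto
  have "(\<Sum>j\<in>J. ennreal (a j) * nn_integral (N j) (\<lambda>x. ennreal (f x)))
      = (\<Sum>j\<in>J. ennreal (b j) * nn_integral (N j) (\<lambda>x. ennreal (f x)))"
  proof (rule nn_integral_lincomb_eqI[OF J sets])
    fix A :: "'a set"
    assume "A \<in> sets borel"
    then show "(\<Sum>j\<in>J. ennreal (a j) * emeasure (N j) A) = (\<Sum>j\<in>J. ennreal (b j) * emeasure (N j) A)"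
      using eq nonneg by (simp add: em sum_ennreal_mult)
  qed (use f in auto)
  then have "ennreal (\<Sum>j\<in>J. a j * integral\<^sup>L (N j) f) = ennreal (\<Sum>j\<in>J. b j * integral\<^sup>L (N j) f)"
    using nonneg int_nonneg by (simp add: nn sum_ennreal_mult)
  then show ?thesis
    using nonneg int_nonneg by (subst (asm) ennreal_inj) (auto intro!: sum_nonneg)
qed

lemma integral_lincomb_eqI:
  fixes N :: "'j \<Rightarrow> 'a::topological_space measure" and a b :: "'j \<Rightarrow> real"
  assumes J: "finite J" and sets: "\<And>j. j \<in> J \<Longrightarrow> sets (N j) = sets borel"
    and finite: "\<And>j. j \<in> J \<Longrightarrow> finite_measure (N j)"
    and nonneg: "\<And>j. j \<in> J \<Longrightarrow> 0 \<le> a j \<and> 0 \<le> b j"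
    and eq: "\<And>A. A \<in> sets borel \<Longrightarrow>
      (\<Sum>j\<in>J. a j * measure (N j) A) = (\<Sum>j\<in>J. b j * measure (N j) A)"
    and f: "f \<in> borel_measurable borel" and bound: "\<And>x. \<bar>f x\<bar> \<le> B"
  shows "(\<Sum>j\<in>J. a j * integral\<^sup>L (N j) f) = (\<Sum>j\<in>J. b j * integral\<^sup>L (N j) f)"
proof -
  define g1 where "g1 x = max 0 (f x)" for x
  define g2 where "g2 x = max 0 (- f x)" for x
  have g1: "g1 \<in> borel_measurable borel" and g2: "g2 \<in> borel_measurable borel"
    unfolding g1_def[abs_def] g2_def[abs_def] using f by measurable
  have bound': "0 \<le> g1 x \<and> g1 x \<le> B" "0 \<le> g2 x \<and> g2 x \<le> B" for x
    using bound[of x] by (auto simp: g1_def g2_def abs_le_iff)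
  have "integrable (N j) g1" "integrable (N j) g2" if "j \<in> J" for j
    using that sets finite g1 g2 bound'
    by (auto intro!: finite_measure.integrable_const_bound[where B=B] cong: measurable_cong_sets)
  moreover have "f = (\<lambda>x. g1 x - g2 x)"
    by (auto simp: g1_def g2_def)
  ultimately have "(\<Sum>j\<in>J. c j * integral\<^sup>L (N j) f)
      = (\<Sum>j\<in>J. c j * integral\<^sup>L (N j) g1) - (\<Sum>j\<in>J. c j * integral\<^sup>L (N j) g2)" for c
    unfolding sum_subtractf[symmetric] by (intro sum.cong) (auto simp: right_diff_distrib)
  then show ?thesis
    using integral_lincomb_eqI_nonneg[OF J sets finite nonneg eq g1 bound'(1)]
      integral_lincomb_eqI_nonneg[OF J sets finite nonneg eq g2 bound'(2)] by simp
qed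

lemma sum_insert_None_Some:
  "finite J \<Longrightarrow> (\<Sum>p\<in>insert None (Some ` J). g p) = g None + (\<Sum>j\<in>J. g (Some j))"
  by (subst sum.insert) (auto simp: sum.reindex)

text \<open>Splitting the coefficients into positive and negative parts reduces the claim to an
  identity between two nonnegative combinations of measures.\<close>

lemma integral_measure_of_real_lincomb:
  fixes \<nu> :: "'a::topological_space set \<Rightarrow> real"
  assumes J: "finite J" and \<nu>: "real_borel_measure \<nu>" and \<nu>j: "\<And>j. j \<in> J \<Longrightarrow> real_borel_measure (\<nu>j j)"
    and eq: "\<And>A. A \<in> sets borel \<Longrightarrow> \<nu> A = (\<Sum>j\<in>J. c j * \<nu>j j A)"
    and f: "f \<in> borel_measurable borel" and bound: "\<And>x. \<bar>f x\<bar> \<le> B"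
  shows "integral\<^sup>L (measure_of_real \<nu>) f = (\<Sum>j\<in>J. c j * integral\<^sup>L (measure_of_real (\<nu>j j)) f)"
proof -
  define N where "N p = (case p of None \<Rightarrow> measure_of_real \<nu> | Some j \<Rightarrow> measure_of_real (\<nu>j j))" for p
  define a where "a p = (case p of None \<Rightarrow> 1 | Some j \<Rightarrow> max 0 (- c j))" for p
  define b where "b p = (case p of None \<Rightarrow> 0 | Some j \<Rightarrow> max 0 (c j))" for p
  let ?J = "insert None (Some ` J)"
  have "(\<Sum>p\<in>?J. a p * integral\<^sup>L (N p) f) = (\<Sum>p\<in>?J. b p * integral\<^sup>L (N p) f)"
  proof (rule integral_lincomb_eqI[OF _ _ _ _ _ f bound])
    show "finite ?J" using J by simp
    show "\<And>p. p \<in> ?J \<Longrightarrow> sets (N p) = sets borel" by (auto simp: N_def)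
    show "\<And>p. p \<in> ?J \<Longrightarrow> finite_measure (N p)"
      using \<nu> \<nu>j by (auto simp: N_def finite_measure_measure_of_real)
    show "\<And>p. p \<in> ?J \<Longrightarrow> 0 \<le> a p \<and> 0 \<le> b p" by (auto simp: a_def b_def)
    fix A :: "'a set"
    assume A: "A \<in> sets borel"
    have "(\<Sum>p\<in>?J. a p * measure (N p) A) = \<nu> A + (\<Sum>j\<in>J. max 0 (- c j) * \<nu>j j A)"
      using A \<nu> \<nu>j by (simp add: sum_insert_None_Some[OF J] a_def N_def measure_measure_of_real)
    also have "\<dots> = (\<Sum>j\<in>J. max 0 (c j) * \<nu>j j A)"
      unfolding eq[OF A] sum.distrib[symmetric] by (intro sum.cong) (auto simp: max_def algebra_simps)
    also have "\<dots> = (\<Sum>p\<in>?J. b p * measure (N p) A)"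
      using A \<nu> \<nu>j by (simp add: sum_insert_None_Some[OF J] b_def N_def measure_measure_of_real)
    finally show "(\<Sum>p\<in>?J. a p * measure (N p) A) = (\<Sum>p\<in>?J. b p * measure (N p) A)" .
  qed
  then have "integral\<^sup>L (measure_of_real \<nu>) f + (\<Sum>j\<in>J. max 0 (- c j) * integral\<^sup>L (measure_of_real (\<nu>j j)) f)
     = (\<Sum>j\<in>J. max 0 (c j) * integral\<^sup>L (measure_of_real (\<nu>j j)) f)"
    by (simp add: sum_insert_None_Some[OF J] a_def b_def N_def)
  moreover have "(\<Sum>j\<in>J. c j * integral\<^sup>L (measure_of_real (\<nu>j j)) f)
      = (\<Sum>j\<in>J. max 0 (c j) * integral\<^sup>L (measure_of_real (\<nu>j j)) f)
        - (\<Sum>j\<in>J. max 0 (- c j) * integral\<^sup>L (measure_of_real (\<nu>j j)) f)"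
    unfolding sum_subtractf[symmetric] by (intro sum.cong) (auto simp: max_def algebra_simps)
  ultimately show ?thesis by simp
qed

lemma integral_measure_of_real_add_lincomb:
  fixes \<nu> \<nu>0 :: "'a::topological_space set \<Rightarrow> real"
  assumes J: "finite J" and \<nu>: "real_borel_measure \<nu>" and \<nu>0: "real_borel_measure \<nu>0"
    and \<nu>j: "\<And>j. j \<in> J \<Longrightarrow> real_borel_measure (\<nu>j j)"
    and eq: "\<And>A. A \<in> sets borel \<Longrightarrow> \<nu> A = \<nu>0 A + (\<Sum>j\<in>J. c j * \<nu>j j A)"
    and f: "f \<in> borel_measurable borel" and bound: "\<And>x. \<bar>f x\<bar> \<le> B"
  shows "integral\<^sup>L (measure_of_real \<nu>) f
    = integral\<^sup>L (measure_of_real \<nu>0) f + (\<Sum>j\<in>J. c j * integral\<^sup>L (measure_of_real (\<nu>j j)) f)"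
proof -
  define \<nu>' where "\<nu>' p = (case p of None \<Rightarrow> \<nu>0 | Some j \<Rightarrow> \<nu>j j)" for p
  define c' where "c' p = (case p of None \<Rightarrow> 1 | Some j \<Rightarrow> c j)" for p
  have "integral\<^sup>L (measure_of_real \<nu>) f
      = (\<Sum>p\<in>insert None (Some ` J). c' p * integral\<^sup>L (measure_of_real (\<nu>' p)) f)"
    using J \<nu>0 \<nu>j eq
    by (intro integral_measure_of_real_lincomb[OF _ \<nu> _ _ f bound])
      (auto simp: sum_insert_None_Some sum.reindex \<nu>'_def c'_def)
  then show ?thesis
    using J by (simp add: sum_insert_None_Some sum.reindex \<nu>'_def c'_def)
qed

lemma integral_measure_of_real_add:
  fixes f :: "'a::topological_space \<Rightarrow> real"
  assumes "real_borel_measure \<nu>" "real_borel_measure \<nu>'"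
    and "f \<in> borel_measurable borel" "\<And>x. \<bar>f x\<bar> \<le> B"
  shows "integral\<^sup>L (measure_of_real (\<lambda>A. \<nu> A + \<nu>' A)) f
    = integral\<^sup>L (measure_of_real \<nu>) f + integral\<^sup>L (measure_of_real \<nu>') f"
proof -
  have "integral\<^sup>L (measure_of_real (\<lambda>A. \<nu> A + \<nu>' A)) f
    = integral\<^sup>L (measure_of_real \<nu>) f + (\<Sum>j\<in>{()}. 1 * integral\<^sup>L (measure_of_real \<nu>') f)"
    by (rule integral_measure_of_real_add_lincomb) (use assms real_borel_measure_add in auto)
  then show ?thesis by simp
qed

section \<open>Extreme points of the scalar moment class\<close>

definition bounded_borel_moments :: "nat \<Rightarrow> (nat \<Rightarrow> 'a::topological_space \<Rightarrow> real) \<Rightarrow> bool" where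
  "bounded_borel_moments m \<phi> \<longleftrightarrow>
     (\<forall>r\<in>{1..m}. \<phi> r \<in> borel_measurable borel \<and> (\<exists>B. \<forall>x. \<bar>\<phi> r x\<bar> \<le> B))"

lemma bounded_borel_momentsE:
  assumes "bounded_borel_moments m \<phi>" and "r \<in> {1..m}"
  obtains B where "\<phi> r \<in> borel_measurable borel" and "\<And>x. \<bar>\<phi> r x\<bar> \<le> B"
  using assms unfolding bounded_borel_moments_def by blast

lemma bounded_borel_moments_continuous:
  assumes "compact (UNIV :: 'a::topological_space set)"
    and "\<And>r. r \<in> {1..m} \<Longrightarrow> continuous_on UNIV (\<phi> r :: 'a \<Rightarrow> real)"
  shows "bounded_borel_moments m \<phi>"
  unfolding bounded_borel_moments_def
proof
  fix r
  assume r: "r \<in> {1..m}"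
  have "bounded (range (\<phi> r))"
    using assms r by (intro compact_imp_bounded compact_continuous_image) auto
  then obtain B where "\<forall>x. \<bar>\<phi> r x\<bar> \<le> B"
    by (auto simp: bounded_iff)
  then show "\<phi> r \<in> borel_measurable borel \<and> (\<exists>B. \<forall>x. \<bar>\<phi> r x\<bar> \<le> B)"
    using borel_measurable_continuous_onI assms(2)[OF r] by blast
qed

definition scalar_Cset :: "nat \<Rightarrow> (nat \<Rightarrow> 'a::topological_space \<Rightarrow> real) \<Rightarrow> ('a set \<Rightarrow> real) \<Rightarrow> bool" where
  "scalar_Cset m \<phi> \<nu> \<longleftrightarrow> real_borel_measure \<nu> \<and> \<nu> UNIV = 1 \<and>
     (\<forall>r\<in>{1..m}. integral\<^sup>L (measure_of_real \<nu>) (\<phi> r) = 0)"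

definition scalar_Cset_extreme ::
    "nat \<Rightarrow> (nat \<Rightarrow> 'a::topological_space \<Rightarrow> real) \<Rightarrow> ('a set \<Rightarrow> real) \<Rightarrow> bool" where
  "scalar_Cset_extreme m \<phi> \<nu> \<longleftrightarrow> scalar_Cset m \<phi> \<nu> \<and>
     (\<forall>\<nu>1 \<nu>2 t. scalar_Cset m \<phi> \<nu>1 \<longrightarrow> scalar_Cset m \<phi> \<nu>2 \<longrightarrow> 0 < t \<longrightarrow> t < 1 \<longrightarrow>
        (\<forall>A\<in>sets borel. \<nu> A = t * \<nu>1 A + (1 - t) * \<nu>2 A) \<longrightarrow> (\<forall>A\<in>sets borel. \<nu>1 A = \<nu>2 A))"

lemma scalar_Cset_extreme_convex_eq:
  assumes "scalar_Cset_extreme m \<phi> \<nu>" "scalar_Cset m \<phi> \<nu>1" "scalar_Cset m \<phi> \<nu>2" "0 < t" "t < 1"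
    and "\<And>A. A \<in> sets borel \<Longrightarrow> \<nu> A = t * \<nu>1 A + (1 - t) * \<nu>2 A"
    and "A \<in> sets borel"
  shows "\<nu>1 A = \<nu> A"
proof -
  have "\<nu>1 A = \<nu>2 A"
    using assms unfolding scalar_Cset_extreme_def by blast
  moreover have "\<nu> A = t * \<nu>1 A + (1 - t) * \<nu>2 A"
    using assms(6,7) by blast
  ultimately show ?thesis
    by (simp add: algebra_simps)
qed

lemma scalar_Cset_step_perturbation:
  assumes C: "scalar_Cset m \<phi> \<nu>" and \<phi>: "bounded_borel_moments m \<phi>"
    and fin: "finite \<E>" and \<E>: "\<E> \<subseteq> sets borel" and small: "(\<Sum>E\<in>\<E>. \<bar>a E\<bar>) \<le> 1"
    and mass: "(\<Sum>E\<in>\<E>. a E * \<nu> E) = 0"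
    and moments: "\<And>r. r \<in> {1..m} \<Longrightarrow>
      (\<Sum>E\<in>\<E>. a E * integral\<^sup>L (measure_of_real (\<lambda>A. \<nu> (A \<inter> E))) (\<phi> r)) = 0"
  shows "scalar_Cset m \<phi> (\<lambda>A. \<nu> A + (\<Sum>E\<in>\<E>. a E * \<nu> (A \<inter> E)))"
proof -
  have \<nu>: "real_borel_measure \<nu>" and \<nu>_UNIV: "\<nu> UNIV = 1"
    and \<nu>_moments: "\<And>r. r \<in> {1..m} \<Longrightarrow> integral\<^sup>L (measure_of_real \<nu>) (\<phi> r) = 0"
    using C by (auto simp: scalar_Cset_def)
  have restrict: "\<And>E. E \<in> \<E> \<Longrightarrow> real_borel_measure (\<lambda>A. \<nu> (A \<inter> E))"
    using \<nu> \<E> by (auto intro: real_borel_measure_restrict)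
  have nonneg: "0 \<le> \<nu> A + (\<Sum>E\<in>\<E>. a E * \<nu> (A \<inter> E))" if A: "A \<in> sets borel" for A
  proof -
    have "\<bar>\<Sum>E\<in>\<E>. a E * \<nu> (A \<inter> E)\<bar> \<le> (\<Sum>E\<in>\<E>. \<bar>a E\<bar>) * \<nu> A"
      by (rule abs_step_measure_le[OF \<nu> \<E> A])
    also have "\<dots> \<le> \<nu> A"
      using small real_borel_measure_nonneg[OF \<nu> A] by (simp add: mult_left_le_one_le sum_nonneg)
    finally show ?thesis by linarith
  qed
  have additive: "real_borel_additive (\<lambda>A. \<nu> A + (\<Sum>E\<in>\<E>. a E * \<nu> (A \<inter> E)))"
    using \<nu> \<E> by (intro real_borel_additive_add real_borel_additive_sum real_borel_additive_restrict)
      (auto simp: real_borel_measure_def)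
  have measure: "real_borel_measure (\<lambda>A. \<nu> A + (\<Sum>E\<in>\<E>. a E * \<nu> (A \<inter> E)))"
    using nonneg additive by (simp add: real_borel_measure_def)
  have "integral\<^sup>L (measure_of_real (\<lambda>A. \<nu> A + (\<Sum>E\<in>\<E>. a E * \<nu> (A \<inter> E)))) (\<phi> r) = 0"
    if r: "r \<in> {1..m}" for r
  proof -
    obtain B where f: "\<phi> r \<in> borel_measurable borel" and B: "\<And>x. \<bar>\<phi> r x\<bar> \<le> B"
      using bounded_borel_momentsE[OF \<phi> r] by blast
    have "integral\<^sup>L (measure_of_real (\<lambda>A. \<nu> A + (\<Sum>E\<in>\<E>. a E * \<nu> (A \<inter> E)))) (\<phi> r)
      = integral\<^sup>L (measure_of_real \<nu>) (\<phi> r)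
        + (\<Sum>E\<in>\<E>. a E * integral\<^sup>L (measure_of_real (\<lambda>A. \<nu> (A \<inter> E))) (\<phi> r))"
      by (rule integral_measure_of_real_add_lincomb[OF fin measure \<nu> restrict _ f B]) auto
    then show ?thesis
      using \<nu>_moments[OF r] moments[OF r] by simp
  qed
  then show ?thesis
    using measure mass \<nu>_UNIV by (simp add: scalar_Cset_def)
qed

lemma scalar_Cset_extreme_step_density_zero:
  assumes ext: "scalar_Cset_extreme m \<phi> \<nu>" and \<phi>: "bounded_borel_moments m \<phi>"
    and fin: "finite \<E>" and \<E>: "\<E> \<subseteq> sets borel" and disj: "disjoint \<E>"
    and mass: "(\<Sum>E\<in>\<E>. a E * \<nu> E) = 0"
    and moments: "\<And>r. r \<in> {1..m} \<Longrightarrow>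
      (\<Sum>E\<in>\<E>. a E * integral\<^sup>L (measure_of_real (\<lambda>A. \<nu> (A \<inter> E))) (\<phi> r)) = 0"
    and E0: "E0 \<in> \<E>"
  shows "a E0 * \<nu> E0 = 0"
proof -
  have C: "scalar_Cset m \<phi> \<nu>"
    using ext by (simp add: scalar_Cset_extreme_def)
  define S where "S = (\<Sum>E\<in>\<E>. \<bar>a E\<bar>)"
  define \<epsilon> where "\<epsilon> = 1 / (1 + S)"
  have "0 \<le> S"
    by (simp add: S_def sum_nonneg)
  then have \<epsilon>: "0 < \<epsilon>" "\<epsilon> * (\<Sum>E\<in>\<E>. \<bar>a E\<bar>) \<le> 1"
    by (simp_all add: \<epsilon>_def field_simps flip: S_def)
  define g where "g A = (\<Sum>E\<in>\<E>. \<epsilon> * a E * \<nu> (A \<inter> E))" for A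
  have perturbed: "scalar_Cset m \<phi> (\<lambda>A. \<nu> A + s * g A)" if "\<bar>s\<bar> = 1" for s
  proof -
    have "scalar_Cset m \<phi> (\<lambda>A. \<nu> A + (\<Sum>E\<in>\<E>. (s * \<epsilon> * a E) * \<nu> (A \<inter> E)))"
    proof (rule scalar_Cset_step_perturbation[OF C \<phi> fin \<E>])
      show "(\<Sum>E\<in>\<E>. \<bar>s * \<epsilon> * a E\<bar>) \<le> 1"
        using that \<epsilon> by (simp add: abs_mult sum_distrib_left[symmetric])
      show "(\<Sum>E\<in>\<E>. s * \<epsilon> * a E * \<nu> E) = 0"
        using mass by (simp add: sum_distrib_left[symmetric] mult.assoc)
      show "(\<Sum>E\<in>\<E>. s * \<epsilon> * a E * integral\<^sup>L (measure_of_real (\<lambda>A. \<nu> (A \<inter> E))) (\<phi> r)) = 0"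
        if "r \<in> {1..m}" for r
        using moments[OF that] by (simp add: sum_distrib_left[symmetric] mult.assoc)
    qed
    then show ?thesis
      by (simp add: g_def sum_distrib_left mult.assoc)
  qed
  have plus: "scalar_Cset m \<phi> (\<lambda>A. \<nu> A + 1 * g A)"
    and minus: "scalar_Cset m \<phi> (\<lambda>A. \<nu> A + (-1) * g A)"
    by (rule perturbed; simp)+
  have "\<nu> E0 + 1 * g E0 = \<nu> E0"
    using E0 \<E> by (intro scalar_Cset_extreme_convex_eq[OF ext plus minus, of "1/2"]) (auto simp: field_simps)
  then have "(\<Sum>E\<in>\<E>. a E * \<nu> (E0 \<inter> E)) = 0"
    using \<epsilon> by (simp add: g_def sum_distrib_left[symmetric] mult.assoc)
  moreover have "(\<Sum>E\<in>\<E>. a E * \<nu> (E0 \<inter> E)) = a E0 * \<nu> E0"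
    using C disj fin E0 by (intro step_measure_member) (simp_all add: scalar_Cset_def)
  ultimately show ?thesis by simp
qed

text \<open>One step of Gaussian elimination: a solution of the system with the pivot column \<open>i0\<close>
  eliminated from the first \<open>n\<close> equations extends to a solution of \<open>n + 1\<close> equations.\<close>

lemma elimination_step_solution:
  fixes f :: "'i \<Rightarrow> nat \<Rightarrow> real"
  assumes I: "finite I" "i0 \<in> I" and pivot: "f i0 n \<noteq> 0"
    and reduced: "\<forall>r<n. (\<Sum>i\<in>I - {i0}. a i * (f i r - f i n / f i0 n * f i0 r)) = 0"
  defines "c \<equiv> - (\<Sum>j\<in>I - {i0}. a j * f j n) / f i0 n"
  shows "\<forall>r<Suc n. (\<Sum>i\<in>I. (a(i0 := c)) i * f i r) = 0"
proof (intro allI impI)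
  fix r
  assume r: "r < Suc n"
  have split: "(\<Sum>i\<in>I. (a(i0 := c)) i * f i r) = c * f i0 r + (\<Sum>i\<in>I - {i0}. a i * f i r)"
  proof -
    have "(\<Sum>i\<in>I - {i0}. (a(i0 := c)) i * f i r) = (\<Sum>i\<in>I - {i0}. a i * f i r)"
      by (intro sum.cong) auto
    then show ?thesis
      using sum.remove[OF I, of "\<lambda>i. (a(i0 := c)) i * f i r"] by simp
  qed
  show "(\<Sum>i\<in>I. (a(i0 := c)) i * f i r) = 0"
  proof (cases "r = n")
    case True
    then show ?thesis
      unfolding split using pivot by (simp add: c_def)
  next
    case False
    have "(\<Sum>i\<in>I - {i0}. a i * (f i n / f i0 n * f i0 r))
        = (\<Sum>i\<in>I - {i0}. a i * f i n) / f i0 n * f i0 r"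
      unfolding sum_divide_distrib sum_distrib_right by (intro sum.cong) auto
    then have "(\<Sum>i\<in>I - {i0}. a i * (f i r - f i n / f i0 n * f i0 r))
        = (\<Sum>i\<in>I - {i0}. a i * f i r) + c * f i0 r"
      by (simp add: c_def right_diff_distrib sum_subtractf)
    then show ?thesis
      unfolding split using reduced r False by (simp add: add.commute)
  qed
qed

lemma exists_nonzero_solution_underdetermined:
  fixes f :: "'i \<Rightarrow> nat \<Rightarrow> real"
  assumes "finite I" and "n < card I"
  shows "\<exists>a. (\<exists>i\<in>I. a i \<noteq> 0) \<and> (\<forall>r<n. (\<Sum>i\<in>I. a i * f i r) = 0)"
  using assms
proof (induction n arbitrary: I f)
  case 0
  then obtain i where "i \<in> I" by fastforce
  then show ?case
    by (intro exI[of _ "\<lambda>j. if j = i then 1 else 0"]) auto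
next
  case (Suc n)
  show ?case
  proof (cases "\<forall>i\<in>I. f i n = 0")
    case True
    then show ?thesis
      using Suc.IH[of I f] Suc.prems by (auto simp: less_Suc_eq)
  next
    case False
    then obtain i0 where i0: "i0 \<in> I" "f i0 n \<noteq> 0" by blast
    have "n < card (I - {i0})"
      using Suc.prems i0 by simp
    then obtain a where a: "\<exists>i\<in>I - {i0}. a i \<noteq> 0"
      "\<forall>r<n. (\<Sum>i\<in>I - {i0}. a i * (f i r - f i n / f i0 n * f i0 r)) = 0"
      using Suc.IH[of "I - {i0}" "\<lambda>i r. f i r - f i n / f i0 n * f i0 r"] Suc.prems(1) by blast
    let ?c = "- (\<Sum>j\<in>I - {i0}. a j * f j n) / f i0 n"
    have "\<exists>i\<in>I. (a(i0 := ?c)) i \<noteq> 0"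
      using a(1) by auto
    with elimination_step_solution[OF Suc.prems(1) i0 a(2)] show ?thesis
      by blast
  qed
qed

definition positive_disjoint_family :: "('a::topological_space set \<Rightarrow> real) \<Rightarrow> 'a set set \<Rightarrow> bool" where
  "positive_disjoint_family \<nu> \<E> \<longleftrightarrow> finite \<E> \<and> \<E> \<subseteq> sets borel \<and> disjoint \<E> \<and> (\<forall>E\<in>\<E>. 0 < \<nu> E)"

lemma scalar_Cset_extreme_card_le:
  assumes ext: "scalar_Cset_extreme m \<phi> \<nu>" and \<phi>: "bounded_borel_moments m \<phi>"
    and \<E>: "positive_disjoint_family \<nu> \<E>"
  shows "card \<E> \<le> m + 1"
proof (rule ccontr)
  assume "\<not> card \<E> \<le> m + 1"
  then have "m + 1 < card \<E>" by simp
  have fin: "finite \<E>" and pos: "\<forall>E\<in>\<E>. 0 < \<nu> E"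
    using \<E> by (auto simp: positive_disjoint_family_def)
  define f where "f E r = (if r = 0 then \<nu> E else integral\<^sup>L (measure_of_real (\<lambda>A. \<nu> (A \<inter> E))) (\<phi> r))"
    for E r
  obtain a where a: "\<exists>E\<in>\<E>. a E \<noteq> 0" "\<forall>r<m+1. (\<Sum>E\<in>\<E>. a E * f E r) = 0"
    using exists_nonzero_solution_underdetermined[OF fin \<open>m + 1 < card \<E>\<close>, of f] by blast
  have "a E * \<nu> E = 0" if "E \<in> \<E>" for E
  proof (rule scalar_Cset_extreme_step_density_zero[OF ext \<phi> fin _ _ _ _ that])
    show "\<E> \<subseteq> sets borel" "disjoint \<E>"
      using \<E> by (auto simp: positive_disjoint_family_def)
    show "(\<Sum>E\<in>\<E>. a E * \<nu> E) = 0"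
      using a(2)[rule_format, of 0] by (simp add: f_def)
    show "(\<Sum>E\<in>\<E>. a E * integral\<^sup>L (measure_of_real (\<lambda>A. \<nu> (A \<inter> E))) (\<phi> r)) = 0"
      if "r \<in> {1..m}" for r
      using a(2)[rule_format, of r] that by (simp add: f_def)
  qed
  then show False
    using a(1) pos by fastforce
qed

lemma positive_disjoint_family_split:
  assumes \<nu>: "real_borel_measure \<nu>" and \<E>: "positive_disjoint_family \<nu> \<E>" and E: "E \<in> \<E>"
    and B: "B \<in> sets borel" "B \<subseteq> E" "0 < \<nu> B" "\<nu> B < \<nu> E"
  shows "positive_disjoint_family \<nu> (insert B (insert (E - B) (\<E> - {E})))"
    and "card (insert B (insert (E - B) (\<E> - {E}))) = card \<E> + 1"
proof -
  have fin: "finite \<E>" and \<E>_borel: "\<E> \<subseteq> sets borel" and disj: "disjoint \<E>"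
    and pos: "\<forall>E\<in>\<E>. 0 < \<nu> E"
    using \<E> by (auto simp: positive_disjoint_family_def)
  have E_borel: "E \<in> sets borel" using E \<E>_borel by auto
  have pos_rest: "0 < \<nu> (E - B)"
    using real_borel_measure_Diff[OF \<nu> B(2,1) E_borel] B(4) by simp
  have nonempty: "B \<noteq> {}" "E - B \<noteq> {}"
    using B(3) pos_rest real_borel_measure_empty[OF \<nu>] by (metis less_irrefl)+
  have disjE: "E \<inter> E' = {}" if "E' \<in> \<E>" "E' \<noteq> E" for E'
    using disj E that by (auto simp: pairwise_def disjnt_def)
  show "positive_disjoint_family \<nu> (insert B (insert (E - B) (\<E> - {E})))"
    unfolding positive_disjoint_family_def
  proof (intro conjI)
    show "disjoint (insert B (insert (E - B) (\<E> - {E})))"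
      using disj disjE B(2) by (auto simp: pairwise_def disjnt_def)
  qed (use fin \<E>_borel E_borel B pos pos_rest in auto)
  have "B \<notin> insert (E - B) (\<E> - {E})" "E - B \<notin> \<E> - {E}"
    using nonempty B(2) disjE by auto
  then show "card (insert B (insert (E - B) (\<E> - {E}))) = card \<E> + 1"
    using fin card.remove[OF fin E] by simp
qed

lemma positive_disjoint_family_insert:
  assumes \<nu>: "real_borel_measure \<nu>" and \<E>: "positive_disjoint_family \<nu> \<E>"
    and R: "R \<in> sets borel" "R \<inter> \<Union>\<E> = {}" "0 < \<nu> R"
  shows "positive_disjoint_family \<nu> (insert R \<E>)" and "card (insert R \<E>) = card \<E> + 1"
proof -
  have "R \<noteq> {}"
    using R(3) real_borel_measure_empty[OF \<nu>] by auto
  then have "R \<notin> \<E>"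
    using R(2) by auto
  then show "positive_disjoint_family \<nu> (insert R \<E>)" "card (insert R \<E>) = card \<E> + 1"
    using \<E> R by (auto simp: positive_disjoint_family_def pairwise_def disjnt_def)
qed

definition borel_atom :: "('a::topological_space set \<Rightarrow> real) \<Rightarrow> 'a set \<Rightarrow> bool" where
  "borel_atom \<nu> E \<longleftrightarrow> (\<forall>B\<in>sets borel. B \<subseteq> E \<longrightarrow> \<nu> B = 0 \<or> \<nu> B = \<nu> E)"

text \<open>A positive disjoint family of maximal cardinality exists by the bound above; maximality
  forbids splitting one of its members, and adding the complement of its union.\<close>

lemma scalar_Cset_extreme_atomic:
  assumes ext: "scalar_Cset_extreme m \<phi> \<nu>" and \<phi>: "bounded_borel_moments m \<phi>"
  obtains \<E> where "positive_disjoint_family \<nu> \<E>" and "\<forall>E\<in>\<E>. borel_atom \<nu> E"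
    and "\<nu> (UNIV - \<Union>\<E>) = 0"
proof -
  have \<nu>: "real_borel_measure \<nu>"
    using ext by (simp add: scalar_Cset_extreme_def scalar_Cset_def)
  have "positive_disjoint_family \<nu> {}"
    by (simp add: positive_disjoint_family_def)
  moreover have "\<forall>\<F>. positive_disjoint_family \<nu> \<F> \<longrightarrow> card \<F> < m + 2"
    using scalar_Cset_extreme_card_le[OF ext \<phi>] by (simp add: less_Suc_eq_le)
  ultimately obtain \<E> where \<E>: "positive_disjoint_family \<nu> \<E>"
    and max: "\<And>\<F>. positive_disjoint_family \<nu> \<F> \<Longrightarrow> card \<F> \<le> card \<E>"
    using Lattices_Big.ex_has_greatest_nat[of "positive_disjoint_family \<nu>" "{}" card "m + 2"] by blast
  have fin: "finite \<E>" and \<E>_borel: "\<E> \<subseteq> sets borel"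
    using \<E> by (auto simp: positive_disjoint_family_def)
  have "borel_atom \<nu> E" if E: "E \<in> \<E>" for E
    unfolding borel_atom_def
  proof (intro ballI impI)
    fix B
    assume B: "B \<in> sets borel" "B \<subseteq> E"
    have "\<nu> B \<le> \<nu> E" "0 \<le> \<nu> B"
      using E \<E>_borel B by (auto intro: real_borel_measure_mono[OF \<nu>] real_borel_measure_nonneg[OF \<nu>])
    then show "\<nu> B = 0 \<or> \<nu> B = \<nu> E"
      using positive_disjoint_family_split[OF \<nu> \<E> E B] max by fastforce
  qed
  moreover have "\<nu> (UNIV - \<Union>\<E>) = 0"
  proof (rule ccontr)
    assume "\<nu> (UNIV - \<Union>\<E>) \<noteq> 0"
    moreover have R: "UNIV - \<Union>\<E> \<in> sets borel"
      using fin \<E>_borel by auto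
    ultimately have "0 < \<nu> (UNIV - \<Union>\<E>)"
      using real_borel_measure_nonneg[OF \<nu> R] by simp
    then show False
      using positive_disjoint_family_insert[OF \<nu> \<E> R] max by fastforce
  qed
  ultimately show ?thesis
    using that \<E> by blast
qed

lemma additive_on_borel_atom:
  fixes \<nu> h :: "'a::topological_space set \<Rightarrow> real"
  assumes \<nu>: "real_borel_measure \<nu>" and E: "E \<in> sets borel" "0 < \<nu> E" "borel_atom \<nu> E"
    and h: "additive (sets borel) h" and null: "\<And>A. A \<in> sets borel \<Longrightarrow> \<nu> A = 0 \<Longrightarrow> h A = 0"
    and A: "A \<in> sets borel"
  shows "h (A \<inter> E) = h E / \<nu> E * \<nu> (A \<inter> E)"
proof -
  have AE: "A \<inter> E \<in> sets borel" and D: "E - A \<inter> E \<in> sets borel"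
    using E A by auto
  have "\<nu> (A \<inter> E) = 0 \<or> \<nu> (A \<inter> E) = \<nu> E"
    using E AE by (simp add: borel_atom_def)
  then consider "\<nu> (A \<inter> E) = 0" | "\<nu> (A \<inter> E) = \<nu> E"
    by blast
  then show ?thesis
  proof cases
    case 1
    then show ?thesis using null AE by simp
  next
    case 2
    then have "h (E - A \<inter> E) = 0"
      using null D real_borel_measure_Diff[OF \<nu> _ AE E(1)] by simp
    moreover have "h E = h (A \<inter> E) + h (E - A \<inter> E)"
      using additiveD[OF h, of "A \<inter> E" "E - A \<inter> E"] AE D by (simp add: Un_Diff_cancel Int_absorb1)
    ultimately show ?thesis
      using 2 E(2) by simp
  qed
qed

lemma additive_atomic_density:
  fixes \<nu> h :: "'a::topological_space set \<Rightarrow> real"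
  assumes \<nu>: "real_borel_measure \<nu>" and \<E>: "positive_disjoint_family \<nu> \<E>"
    and atoms: "\<forall>E\<in>\<E>. borel_atom \<nu> E" and rest: "\<nu> (UNIV - \<Union>\<E>) = 0"
    and h: "additive (sets borel) h" and null: "\<And>A. A \<in> sets borel \<Longrightarrow> \<nu> A = 0 \<Longrightarrow> h A = 0"
    and A: "A \<in> sets borel"
  shows "h A = (\<Sum>E\<in>\<E>. h E / \<nu> E * \<nu> (A \<inter> E))"
proof -
  have fin: "finite \<E>" and \<E>_borel: "\<E> \<subseteq> sets borel" and disj: "disjoint \<E>"
    and pos: "\<forall>E\<in>\<E>. 0 < \<nu> E"
    using \<E> by (auto simp: positive_disjoint_family_def)
  have U: "(\<Union>E\<in>\<E>. A \<inter> E) \<in> sets borel" and R: "A - \<Union>\<E> \<in> sets borel"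
    using A fin \<E>_borel by auto
  have "h A = h ((\<Union>E\<in>\<E>. A \<inter> E) \<union> (A - \<Union>\<E>))"
    by (rule arg_cong[where f=h]) auto
  also have "\<dots> = h (\<Union>E\<in>\<E>. A \<inter> E) + h (A - \<Union>\<E>)"
    using h U R by (intro additiveD) auto
  also have "h (A - \<Union>\<E>) = 0"
  proof (rule null[OF R])
    have "\<nu> (A - \<Union>\<E>) \<le> \<nu> (UNIV - \<Union>\<E>)"
      using R fin \<E>_borel by (intro real_borel_measure_mono[OF \<nu>]) auto
    then show "\<nu> (A - \<Union>\<E>) = 0"
      using rest real_borel_measure_nonneg[OF \<nu> R] by simp
  qed
  also have "h (\<Union>E\<in>\<E>. A \<inter> E) = (\<Sum>E\<in>\<E>. h (A \<inter> E))"
    using A \<E>_borel disj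
    by (intro additive_borel_UN[OF h fin]) (auto simp: disjoint_family_on_def pairwise_def disjnt_def)
  also have "\<dots> = (\<Sum>E\<in>\<E>. h E / \<nu> E * \<nu> (A \<inter> E))"
    using \<E>_borel pos atoms by (intro sum.cong additive_on_borel_atom[OF \<nu> _ _ _ h null A]) auto
  finally show ?thesis by simp
qed

lemma additive_borel_combination:
  fixes p \<nu> \<nu>' h :: "'a::topological_space set \<Rightarrow> real"
  assumes p: "real_borel_measure p" and \<nu>: "real_borel_measure \<nu>" and \<nu>': "real_borel_measure \<nu>'"
    and p_eq: "\<And>A. A \<in> sets borel \<Longrightarrow> p A = \<nu> A + \<nu>' A + 2 * h A"
  shows "additive (sets borel) h"
  unfolding additive_def
proof (intro ballI impI)
  fix A B :: "'a set"
  assume AB: "A \<in> sets borel" "B \<in> sets borel" "A \<inter> B = {}"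
  then show "h (A \<union> B) = h A + h B"
    using real_borel_measure_Un[OF p AB] real_borel_measure_Un[OF \<nu> AB] real_borel_measure_Un[OF \<nu>' AB]
      p_eq[of A] p_eq[of B] p_eq[of "A \<union> B"] by simp
qed

lemma scalar_Cset_extreme_cross_term_zero:
  assumes ext: "scalar_Cset_extreme m \<phi> \<nu>" and \<phi>: "bounded_borel_moments m \<phi>"
    and C': "scalar_Cset m \<phi> \<nu>'"
    and p: "real_borel_measure p" "p UNIV = 2"
      "\<And>r. r \<in> {1..m} \<Longrightarrow> integral\<^sup>L (measure_of_real p) (\<phi> r) = 0"
    and p_eq: "\<And>A. A \<in> sets borel \<Longrightarrow> p A = \<nu> A + \<nu>' A + 2 * h A"
    and null: "\<And>A. A \<in> sets borel \<Longrightarrow> \<nu> A = 0 \<Longrightarrow> h A = 0"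
    and A: "A \<in> sets borel"
  shows "h A = 0"
proof -
  have C: "scalar_Cset m \<phi> \<nu>"
    using ext by (simp add: scalar_Cset_extreme_def)
  have \<nu>: "real_borel_measure \<nu>" and \<nu>': "real_borel_measure \<nu>'"
    using C C' by (auto simp: scalar_Cset_def)
  obtain \<E> where \<E>: "positive_disjoint_family \<nu> \<E>" and atoms: "\<forall>E\<in>\<E>. borel_atom \<nu> E"
    and rest: "\<nu> (UNIV - \<Union>\<E>) = 0"
    using scalar_Cset_extreme_atomic[OF ext \<phi>] by blast
  have fin: "finite \<E>" and \<E>_borel: "\<E> \<subseteq> sets borel" and pos: "\<forall>E\<in>\<E>. 0 < \<nu> E"
    using \<E> by (auto simp: positive_disjoint_family_def)
  have "additive (sets borel) h"
    by (rule additive_borel_combination[OF p(1) \<nu> \<nu>' p_eq])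
  define d where "d E = h E / \<nu> E" for E
  have h_eq: "\<And>A. A \<in> sets borel \<Longrightarrow> h A = (\<Sum>E\<in>\<E>. d E * \<nu> (A \<inter> E))"
    unfolding d_def using additive_atomic_density[OF \<nu> \<E> atoms rest \<open>additive (sets borel) h\<close> null] .
  have restrict: "\<And>E. E \<in> \<E> \<Longrightarrow> real_borel_measure (\<lambda>A. \<nu> (A \<inter> E))"
    using \<nu> \<E>_borel by (auto intro: real_borel_measure_restrict)
  have "d E * \<nu> E = 0" if E: "E \<in> \<E>" for E
  proof (rule scalar_Cset_extreme_step_density_zero[OF ext \<phi> fin \<E>_borel _ _ _ E])
    show "disjoint \<E>"
      using \<E> by (simp add: positive_disjoint_family_def)
    show "(\<Sum>E\<in>\<E>. d E * \<nu> E) = 0"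
      using h_eq[of UNIV] p_eq[of UNIV] p(2) C C' by (simp add: scalar_Cset_def)
    fix r
    assume r: "r \<in> {1..m}"
    obtain B where f: "\<phi> r \<in> borel_measurable borel" and B: "\<And>x. \<bar>\<phi> r x\<bar> \<le> B"
      using bounded_borel_momentsE[OF \<phi> r] by blast
    have "integral\<^sup>L (measure_of_real p) (\<phi> r) = integral\<^sup>L (measure_of_real (\<lambda>A. \<nu> A + \<nu>' A)) (\<phi> r)
        + (\<Sum>E\<in>\<E>. (2 * d E) * integral\<^sup>L (measure_of_real (\<lambda>A. \<nu> (A \<inter> E))) (\<phi> r))"
      using p_eq h_eq
      by (intro integral_measure_of_real_add_lincomb[OF fin p(1) real_borel_measure_add[OF \<nu> \<nu>'] restrict _ f B])
        (auto simp: sum_distrib_left mult.assoc)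
    then show "(\<Sum>E\<in>\<E>. d E * integral\<^sup>L (measure_of_real (\<lambda>A. \<nu> (A \<inter> E))) (\<phi> r)) = 0"
      using p(3)[OF r] C C' r integral_measure_of_real_add[OF \<nu> \<nu>' f B]
      by (simp add: scalar_Cset_def sum_distrib_left[symmetric] mult.assoc)
  qed
  then have "\<forall>E\<in>\<E>. d E = 0"
    using pos by fastforce
  then show ?thesis
    using h_eq[OF A] by simp
qed

section \<open>Rank-one projections and orthonormal bases of \<open>\<complex>\<^sup>n\<close>\<close>

definition cinner :: "complex^'n \<Rightarrow> complex^'n \<Rightarrow> complex" where
  "cinner x y = (\<Sum>i\<in>UNIV. cnj (x$i) * y$i)"

lemma qform_cinner: "qform v A = cinner v (A *v v)"
  by (simp add: qform_def cinner_def)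

lemma cinner_add_left: "cinner (x + y) z = cinner x z + cinner y z"
  by (simp add: cinner_def distrib_right sum.distrib)

lemma cinner_add_right: "cinner x (y + z) = cinner x y + cinner x z"
  by (simp add: cinner_def distrib_left sum.distrib)

lemma cinner_scale_left: "cinner (c *s x) y = cnj c * cinner x y"
  by (simp add: cinner_def sum_distrib_left mult_ac)

lemma cinner_scale_right: "cinner x (c *s y) = c * cinner x y"
  by (simp add: cinner_def sum_distrib_left mult_ac)

lemma cinner_zero_right [simp]: "cinner x 0 = 0"
  by (simp add: cinner_def)

lemma cinner_sum_right: "cinner x (\<Sum>k\<in>K. y k) = (\<Sum>k\<in>K. cinner x (y k))"
  by (induct K rule: infinite_finite_induct) (auto simp: cinner_add_right)

lemma cinner_commute: "cinner y x = cnj (cinner x y)"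
  by (simp add: cinner_def mult.commute)

lemma cinner_self: "cinner x x = complex_of_real (\<Sum>i\<in>UNIV. (cmod (x$i))\<^sup>2)"
  by (simp add: cinner_def complex_norm_square mult.commute flip: of_real_power)

lemma cinner_self_pos:
  assumes "x \<noteq> 0"
  shows "0 < (\<Sum>i\<in>UNIV. (cmod (x$i))\<^sup>2)"
proof -
  obtain i where "x$i \<noteq> 0"
    using assms by (auto simp: vec_eq_iff)
  then have "0 < (cmod (x$i))\<^sup>2" by simp
  also have "\<dots> \<le> (\<Sum>i\<in>UNIV. (cmod (x$i))\<^sup>2)"
    by (rule member_le_sum) auto
  finally show ?thesis .
qed

lemma cinner_adjoint: "cinner y ((A::complex^'n^'n) *v x) = cinner (adjoint_mat A *v y) x"
proof -
  have "cinner y (A *v x) = (\<Sum>i\<in>UNIV. \<Sum>j\<in>UNIV. cnj (y$i) * A$i$j * x$j)"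
    by (simp add: cinner_def matrix_vector_mult_def sum_distrib_left mult_ac)
  also have "\<dots> = (\<Sum>j\<in>UNIV. \<Sum>i\<in>UNIV. cnj (y$i) * A$i$j * x$j)"
    by (rule sum.swap)
  also have "\<dots> = cinner (adjoint_mat A *v y) x"
    by (simp add: cinner_def matrix_vector_mult_def adjoint_mat_def sum_distrib_left
        sum_distrib_right mult_ac)
  finally show ?thesis .
qed

lemma matrix_vector_mult_sum_left: "(\<Sum>k\<in>K. A k) *v (x::complex^'n) = (\<Sum>k\<in>K. A k *v x)"
  by (induct K rule: infinite_finite_induct) (auto simp: matrix_vector_mult_add_rdistrib)

lemma matrix_vector_mult_cmat_scale: "cmat_scale c A *v (x::complex^'n) = c *s (A *v x)"
  by (simp add: vec_eq_iff matrix_vector_mult_def cmat_scale_def sum_distrib_left mult_ac)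

lemma rank_one_matrix_outer:
  fixes P :: "complex^'n^'n"
  assumes "rank P = 1"
  obtains b c where "\<And>x. P *v x = (\<Sum>j\<in>UNIV. b$j * x$j) *s c" and "P \<noteq> 0"
proof -
  obtain B where B: "B \<subseteq> rows P" "vec.independent B" "rows P \<subseteq> vec.span B"
    "card B = vec.dim (rows P)"
    using vec.basis_exists by blast
  then have "card B = 1"
    using assms by (simp add: row_rank_def_gen)
  then obtain b where b: "B = {b}"
    by (auto simp: card_Suc_eq)
  have "b \<noteq> 0"
    using B(2) b by simp
  from b B(1) obtain i0 where i0: "b = row i0 P"
    by (auto simp: rows_def)
  have "\<forall>i. \<exists>k. row i P = k *s b"
    using B(3) b by (auto simp: rows_def vec.span_singleton)
  then obtain c where c: "\<And>i. row i P = c i *s b"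
    by metis
  then have "P$i$j = c i * b$j" for i j
    by (simp add: vec_eq_iff row_def)
  then have "P *v x = (\<Sum>j\<in>UNIV. b$j * x$j) *s (\<chi> i. c i)" for x
    by (simp add: vec_eq_iff matrix_vector_mult_def sum_distrib_left mult_ac)
  moreover have "P \<noteq> 0"
    using \<open>b \<noteq> 0\<close> i0 by (auto simp: row_def vec_eq_iff)
  ultimately show ?thesis
    using that by blast
qed

text \<open>Self-adjointness identifies the functional of the factorisation \<open>P x = \<beta> x c\<close> with
  \<open>cinner c / \<parallel>c\<parallel>\<^sup>2\<close>.\<close>

lemma rank_one_orth_proj_range:
  fixes P :: "complex^'n^'n"
  assumes "rank_one_orth_proj P"
  obtains c and s :: real where "0 < s" and "cinner c c = complex_of_real s"
    and "\<And>x. P *v x = (cinner c x / complex_of_real s) *s c"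
proof -
  have adj: "adjoint_mat P = P" and idem: "P ** P = P" and rk: "rank P = 1"
    using assms by (auto simp: rank_one_orth_proj_def)
  obtain b c where bc: "\<And>x. P *v x = (\<Sum>j\<in>UNIV. b$j * x$j) *s c" and P0: "P \<noteq> 0"
    using rank_one_matrix_outer[OF rk] by blast
  define \<beta> where "\<beta> x = (\<Sum>j\<in>UNIV. b$j * x$j)" for x
  have Px: "\<And>x. P *v x = \<beta> x *s c"
    using bc by (simp add: \<beta>_def)
  obtain x0 where "P *v x0 \<noteq> 0"
    using P0 matrix_eq[of P 0] by auto
  then have \<beta>x0: "\<beta> x0 \<noteq> 0" and c0: "c \<noteq> 0"
    by (auto simp: Px)
  have "P *v (P *v x0) = P *v x0"
    by (simp add: matrix_vector_mul_assoc idem)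
  then have "(\<beta> x0 * \<beta> c) *s c = \<beta> x0 *s c"
    by (simp add: Px vec.scale vector_smult_assoc)
  then have "\<beta> c = 1"
    using c0 \<beta>x0 by simp
  then have Pc: "P *v c = c"
    by (simp add: Px)
  define s where "s = (\<Sum>i\<in>UNIV. (cmod (c$i))\<^sup>2)"
  have s0: "0 < s"
    using cinner_self_pos[OF c0] by (simp add: s_def)
  have cc: "cinner c c = complex_of_real s"
    by (simp add: cinner_self s_def)
  have "\<beta> x = cinner c x / complex_of_real s" for x
  proof -
    have "cinner c (P *v x) = cinner c x"
      using cinner_adjoint[of c P x] by (simp add: adj Pc)
    then have "\<beta> x * complex_of_real s = cinner c x"
      by (simp add: Px cinner_scale_right cc)
    then show ?thesis
      using s0 by (simp add: field_simps)
  qed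
  then show ?thesis
    using that s0 cc by (simp add: Px)
qed

lemma rank_one_orth_proj_outer:
  fixes P :: "complex^'n^'n"
  assumes "rank_one_orth_proj P"
  obtains u where "cinner u u = 1" and "\<And>x. P *v x = cinner u x *s u"
proof -
  obtain c and s :: real where s0: "0 < s" and cc: "cinner c c = complex_of_real s"
    and Px: "\<And>x. P *v x = (cinner c x / complex_of_real s) *s c"
    using rank_one_orth_proj_range[OF assms] by blast
  define r where "r = complex_of_real (1 / sqrt s)"
  have "(1 / sqrt s) * (1 / sqrt s) = 1 / s"
    using s0 by (simp add: field_simps)
  then have rr: "r * r = complex_of_real (1 / s)"
    by (simp add: r_def flip: of_real_mult)
  have cnj_r: "cnj r = r"
    by (simp add: r_def)
  define u where "u = r *s c"
  have "cinner u u = r * r * complex_of_real s"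
    by (simp add: u_def cinner_scale_left cinner_scale_right cnj_r cc)
  then have "cinner u u = 1"
    using s0 by (simp add: rr flip: of_real_mult)
  moreover have "P *v x = cinner u x *s u" for x
  proof -
    have "cinner u x *s u = (r * r * cinner c x) *s c"
      by (simp add: u_def cinner_scale_left cnj_r vector_smult_assoc mult_ac)
    then show ?thesis
      by (simp add: Px rr divide_inverse mult.commute)
  qed
  ultimately show ?thesis
    using that by blast
qed

definition orthonormal_basis :: "('n::finite \<Rightarrow> complex^'n) \<Rightarrow> bool" where
  "orthonormal_basis u \<longleftrightarrow> (\<forall>j k. cinner (u j) (u k) = (if j = k then 1 else 0)) \<and>
     (\<forall>x. x = (\<Sum>k\<in>UNIV. cinner (u k) x *s u k))"

lemma orth_projections_orthonormal_basis:
  fixes P :: "'n::finite \<Rightarrow> complex^'n^'n"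
  assumes proj: "\<And>k. rank_one_orth_proj (P k)" and orth: "\<And>j k. j \<noteq> k \<Longrightarrow> P j ** P k = 0"
    and sum: "(\<Sum>k\<in>UNIV. P k) = mat 1"
  obtains u where "orthonormal_basis u" and "\<And>k x. P k *v x = cinner (u k) x *s u k"
proof -
  have "\<exists>v. cinner v v = 1 \<and> (\<forall>x. P k *v x = cinner v x *s v)" for k
    using rank_one_orth_proj_outer[OF proj[of k]] by blast
  then obtain u where u: "\<And>k. cinner (u k) (u k) = 1" and Pu: "\<And>k x. P k *v x = cinner (u k) x *s u k"
    by metis
  have "cinner (u j) (u k) = 0" if "j \<noteq> k" for j k
  proof -
    have "P j *v u j = u j" "P k *v u k = u k"
      by (simp_all add: Pu u)
    then have "cinner (u j) (u k) = cinner (u j) (P j *v (P k *v u k))"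
      using cinner_adjoint[of "u j" "P j" "P k *v u k"] proj[of j]
      by (simp add: rank_one_orth_proj_def)
    also have "\<dots> = 0"
      using orth[OF that] by (simp add: matrix_vector_mul_assoc)
    finally show ?thesis .
  qed
  moreover have "x = (\<Sum>k\<in>UNIV. cinner (u k) x *s u k)" for x
    using matrix_vector_mult_sum_left[of P UNIV x] by (simp add: sum Pu)
  ultimately have "orthonormal_basis u"
    using u by (simp add: orthonormal_basis_def)
  then show ?thesis
    using that Pu by blast
qed

lemma orthonormal_basis_cinner:
  "orthonormal_basis u \<Longrightarrow> cinner (u j) (u k) = (if j = k then 1 else 0)"
  by (simp add: orthonormal_basis_def)

lemma orthonormal_basis_expansion:
  assumes "orthonormal_basis u"
  shows "(\<Sum>k\<in>UNIV. cinner (u k) x *s u k) = x"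
proof -
  have "\<forall>x. x = (\<Sum>k\<in>UNIV. cinner (u k) x *s u k)"
    using assms unfolding orthonormal_basis_def by (rule conjunct2)
  then show ?thesis
    by (rule sym[OF spec[of _ x]])
qed

lemma orthonormal_basis_matrix_eqI:
  fixes M N :: "complex^'n::finite^'n"
  assumes "orthonormal_basis u" and "\<And>k. M *v u k = N *v u k"
  shows "M = N"
proof (rule matrix_eq[THEN iffD2], rule allI)
  fix x
  have x: "x = (\<Sum>k\<in>UNIV. cinner (u k) x *s u k)"
    using orthonormal_basis_expansion[OF assms(1)] by simp
  have "M *v x = (\<Sum>k\<in>UNIV. cinner (u k) x *s (M *v u k))"
    by (subst x) (simp add: vec.sum vec.scale)
  also have "\<dots> = N *v x"
    by (subst (2) x) (simp add: vec.sum vec.scale assms(2))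
  finally show "M *v x = N *v x" .
qed

lemma orthonormal_basis_eigenvector:
  fixes M :: "complex^'n::finite^'n"
  assumes "orthonormal_basis u" and "\<And>j. j \<noteq> k \<Longrightarrow> cinner (u j) (M *v u k) = 0"
  shows "M *v u k = cinner (u k) (M *v u k) *s u k"
proof -
  have "M *v u k = (\<Sum>j\<in>UNIV. cinner (u j) (M *v u k) *s u j)"
    using orthonormal_basis_expansion[OF assms(1)] by simp
  also have "\<dots> = (\<Sum>j\<in>UNIV. if j = k then cinner (u k) (M *v u k) *s u k else 0)"
    using assms(2) by (intro sum.cong) auto
  finally show ?thesis by simp
qed

section \<open>Positive matrix measures and their quadratic forms\<close>

definition pos_matrix_measure :: "('a::topological_space set \<Rightarrow> complex^'n^'n) \<Rightarrow> bool" where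
  "pos_matrix_measure \<nu> \<longleftrightarrow> matrix_measure \<nu> \<and> (\<forall>A\<in>sets borel. psd_mat (\<nu> A))"

definition quad_measure :: "('a::topological_space set \<Rightarrow> complex^'n^'n) \<Rightarrow> complex^'n \<Rightarrow> 'a set \<Rightarrow> real" where
  "quad_measure \<nu> v A = Re (qform v (\<nu> A))"

lemma qmeasure_eq_measure_of_real: "qmeasure \<nu> v = measure_of_real (quad_measure \<nu> v)"
  by (simp add: qmeasure_def measure_of_real_def quad_measure_def)

lemma qform_zero [simp]: "qform v 0 = 0"
  by (simp add: qform_def)

lemma qform_add: "qform v (A + B) = qform v A + qform v B"
  by (simp add: qform_cinner matrix_vector_mult_add_rdistrib cinner_add_right)

lemma qform_scaleR: "qform v (r *\<^sub>R A) = complex_of_real r * qform v A"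
proof -
  have mv: "(r *\<^sub>R A) *v v = r *\<^sub>R (A *v v)"
    by (simp add: vec_eq_iff matrix_vector_mult_def scaleR_sum_right)
  show ?thesis
    unfolding qform_cinner mv cinner_def vector_scaleR_component
    by (simp add: scaleR_conv_of_real sum_distrib_left mult_ac)
qed

lemma qform_add_scaled:
  "qform (x + c *s y) M
    = qform x M + c * cinner x (M *v y) + cnj c * cinner y (M *v x) + cnj c * c * qform y M"
  by (simp add: qform_cinner matrix_vector_right_distrib vector_scalar_commute cinner_add_left
      cinner_add_right cinner_scale_left cinner_scale_right algebra_simps)

lemma psd_mat_qform_real: "psd_mat M \<Longrightarrow> qform v M = complex_of_real (Re (qform v M))"
  by (simp add: psd_mat_def)

lemma psd_mat_cinner_commute:
  assumes "psd_mat M"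
  shows "cinner y (M *v x) = cnj (cinner x (M *v y))"
proof -
  have real: "\<And>v. Im (qform v M) = 0"
    using assms by (simp add: psd_mat_def complex_is_Real_iff)
  have "Im (qform (x + 1 *s y) M) = 0" "Im (qform (x + \<i> *s y) M) = 0"
    by (rule real)+
  then show ?thesis
    using real[of x] real[of y] unfolding qform_add_scaled
    by (intro complex_eqI) simp_all
qed

text \<open>If \<open>x\<^sup>* M x = 0\<close> for a positive semidefinite \<open>M\<close>, then \<open>M x = 0\<close>: otherwise
  \<open>(y + \<gamma> x)\<^sup>* M (y + \<gamma> x)\<close> would be negative for suitable \<open>\<gamma>\<close>.\<close>

lemma psd_mat_cinner_null:
  assumes psd: "psd_mat M" and null: "qform x M = 0"
  shows "cinner x (M *v y) = 0"
proof (rule ccontr)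
  define c where "c = cinner x (M *v y)"
  assume "c \<noteq> 0"
  define t where "t = (Re (qform y M) + 1) / (cmod c)\<^sup>2"
  define \<gamma> where "\<gamma> = - complex_of_real t * c"
  have "qform (y + \<gamma> *s x) M = qform y M + (\<gamma> * cnj c + cnj \<gamma> * c)"
    using null psd_mat_cinner_commute[OF psd, of y x] by (simp add: qform_add_scaled c_def)
  then have "Re (qform (y + \<gamma> *s x) M) = Re (qform y M) + 2 * Re (\<gamma> * cnj c)"
    by (simp add: cnj_add_mult_eq_Re)
  also have "Re (\<gamma> * cnj c) = - (Re (qform y M) + 1)"
  proof -
    have "\<gamma> * cnj c = - (complex_of_real t * (c * cnj c))"
      by (simp add: \<gamma>_def)
    also have "c * cnj c = complex_of_real ((cmod c)\<^sup>2)"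
      by (rule complex_norm_square[symmetric])
    finally show ?thesis
      using \<open>c \<noteq> 0\<close> by (simp add: t_def)
  qed
  finally have "Re (qform (y + \<gamma> *s x) M) = - Re (qform y M) - 2"
    by simp
  moreover have "0 \<le> Re (qform (y + \<gamma> *s x) M)" "0 \<le> Re (qform y M)"
    using psd by (simp_all add: psd_mat_def)
  ultimately show False by linarith
qed

lemma matrix_measure_sums:
  assumes "bounded_linear L" "matrix_measure \<nu>" "range F \<subseteq> sets borel" "disjoint_family F"
  shows "(\<lambda>n. L (\<nu> (F n))) sums L (\<nu> (\<Union>n. F n))"
  using assms by (intro bounded_linear.sums[OF assms(1)]) (auto simp: matrix_measure_def)

lemma real_borel_measure_quad_measure:
  assumes "pos_matrix_measure \<nu>"
  shows "real_borel_measure (quad_measure \<nu> v)"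
proof -
  have "linear (\<lambda>M. Re (qform v M))"
    by (intro linearI) (simp_all add: qform_add qform_scaleR)
  then have "bounded_linear (\<lambda>M. Re (qform v M))"
    using linear_conv_bounded_linear by blast
  then show ?thesis
    using assms matrix_measure_sums[of "\<lambda>M. Re (qform v M)" \<nu>]
    by (auto simp: real_borel_measure_def real_borel_additive_def quad_measure_def
        pos_matrix_measure_def psd_mat_def)
qed

lemma sum_axis_right: "(\<Sum>q\<in>UNIV. g q * (axis i a)$q) = g i * (a::complex)"
proof -
  have "(\<Sum>q\<in>UNIV. g q * (axis i a)$q) = (\<Sum>q\<in>UNIV. if q = i then g q * a else 0)"
    by (intro sum.cong) (auto simp: axis_def)
  then show ?thesis by simp
qed

lemma sum_axis_left: "(\<Sum>q\<in>UNIV. cnj ((axis i a)$q) * g q) = cnj a * (g i::complex)"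
proof -
  have "(\<Sum>q\<in>UNIV. cnj ((axis i a)$q) * g q) = (\<Sum>q\<in>UNIV. if q = i then cnj a * g q else 0)"
    by (intro sum.cong) (auto simp: axis_def)
  then show ?thesis by simp
qed

lemma qform_axis_pair:
  "qform (axis i a + axis l b) (M::complex^'n^'n)
    = cnj a * a * M$i$i + cnj a * b * M$i$l + cnj b * a * M$l$i + cnj b * b * M$l$l"
proof -
  have mv: "(M *v (axis i a + axis l b))$p = M$p$i * a + M$p$l * b" for p
    by (simp add: matrix_vector_mult_def distrib_left sum.distrib sum_axis_right)
  have "qform (axis i a + axis l b) M = (\<Sum>p\<in>UNIV. cnj ((axis i a)$p) * (M$p$i * a + M$p$l * b))
      + (\<Sum>p\<in>UNIV. cnj ((axis l b)$p) * (M$p$i * a + M$p$l * b))"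
    by (simp add: qform_def mv distrib_right sum.distrib)
  also have "\<dots> = cnj a * (M$i$i * a + M$i$l * b) + cnj b * (M$l$i * a + M$l$l * b)"
    by (simp only: sum_axis_left)
  finally show ?thesis by (simp add: algebra_simps)
qed

lemma matrix_entry_polarization:
  "M$i$l = (1/4) * (\<Sum>k<(4::nat). cnj (\<i>^k) * qform (axis i 1 + axis l (\<i>^k)) (M::complex^'n^'n))"
proof -
  have sum4: "(\<Sum>k<(4::nat). f k) = f 0 + f 1 + f 2 + f 3" for f :: "nat \<Rightarrow> complex"
    by (simp add: eval_nat_numeral)
  show ?thesis
    unfolding qform_axis_pair sum4 by (simp add: power3_eq_cube power2_eq_square algebra_simps)
qed

lemma qform_expand: "qform v (M::complex^'n^'n) = (\<Sum>i\<in>UNIV. \<Sum>l\<in>UNIV. cnj (v$i) * v$l * M$i$l)"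
  by (simp add: qform_def matrix_vector_mult_def sum_distrib_left mult_ac)

text \<open>By polarisation \<open>v\<^sup>* \<nu> v\<close> is a real combination of the measures \<open>w\<^sup>* \<nu> w\<close> with
  \<open>w = e\<^sub>i + \<i>\<^sup>k e\<^sub>l\<close>, whose integrals define \<open>mat_integral\<close>.\<close>

lemma integral_quad_measure:
  fixes \<nu> :: "'a::topological_space set \<Rightarrow> complex^'n^'n"
  assumes \<nu>: "pos_matrix_measure \<nu>" and f: "f \<in> borel_measurable borel" and bound: "\<And>x. \<bar>f x\<bar> \<le> B"
  shows "integral\<^sup>L (measure_of_real (quad_measure \<nu> v)) f = Re (qform v (mat_integral \<nu> f))"
proof -
  define w where "w i l k = axis i 1 + axis l (\<i>^k)" for i l :: 'n and k :: nat
  let ?J = "UNIV \<times> UNIV \<times> {..<(4::nat)}"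
  define cc where "cc = (\<lambda>(i, l, k). cnj (v$i) * v$l * ((1/4) * cnj (\<i>^k)))"
  define c where "c j = Re (cc j)" for j
  define \<nu>j where "\<nu>j = (\<lambda>(i, l, k). quad_measure \<nu> (w i l k))"
  have comb: "(\<Sum>j\<in>?J. c j * g j) = Re (\<Sum>i\<in>UNIV. \<Sum>l\<in>UNIV. cnj (v$i) * v$l *
      ((1/4) * (\<Sum>k<4. cnj (\<i>^k) * complex_of_real (g (i, l, k)))))"
    for g :: "'n \<times> 'n \<times> nat \<Rightarrow> real"
  proof -
    have triple: "(\<Sum>j\<in>?J. h j) = (\<Sum>i\<in>UNIV. \<Sum>l\<in>UNIV. \<Sum>k<4. h (i, l, k))"
      for h :: "'n \<times> 'n \<times> nat \<Rightarrow> complex"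
      by (simp add: sum.cartesian_product)
    have "(\<Sum>j\<in>?J. c j * g j) = Re (\<Sum>j\<in>?J. cc j * complex_of_real (g j))"
      unfolding Re_sum by (intro sum.cong) (auto simp: c_def)
    also have "(\<Sum>j\<in>?J. cc j * complex_of_real (g j)) = (\<Sum>i\<in>UNIV. \<Sum>l\<in>UNIV. cnj (v$i) * v$l *
        ((1/4) * (\<Sum>k<4. cnj (\<i>^k) * complex_of_real (g (i, l, k)))))"
      unfolding triple by (simp add: cc_def sum_distrib_left mult_ac)
    finally show ?thesis .
  qed
  have "quad_measure \<nu> v A = (\<Sum>j\<in>?J. c j * \<nu>j j A)" if A: "A \<in> sets borel" for A
  proof -
    have "psd_mat (\<nu> A)"
      using \<nu> A by (simp add: pos_matrix_measure_def)
    then have "qform x (\<nu> A) = complex_of_real (quad_measure \<nu> x A)" for x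
      unfolding quad_measure_def by (rule psd_mat_qform_real)
    then have entry: "\<nu> A $ i $ l = (1/4) * (\<Sum>k<4. cnj (\<i>^k) * complex_of_real (\<nu>j (i, l, k) A))"
      for i l
      using matrix_entry_polarization[of "\<nu> A" i l] by (simp add: \<nu>j_def w_def)
    have "quad_measure \<nu> v A = Re (\<Sum>i\<in>UNIV. \<Sum>l\<in>UNIV. cnj (v$i) * v$l * \<nu> A $ i $ l)"
      by (simp add: quad_measure_def qform_expand)
    then show ?thesis
      unfolding comb[of "\<lambda>j. \<nu>j j A"] entry by simp
  qed
  then have "integral\<^sup>L (measure_of_real (quad_measure \<nu> v)) f
      = (\<Sum>j\<in>?J. c j * integral\<^sup>L (measure_of_real (\<nu>j j)) f)"
    using \<nu> by (intro integral_measure_of_real_lincomb[OF _ _ _ _ f bound])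
      (auto simp: \<nu>j_def real_borel_measure_quad_measure)
  also have "\<dots> = Re (qform v (mat_integral \<nu> f))"
    by (simp add: comb qform_expand mat_integral_def qmeasure_eq_measure_of_real \<nu>j_def w_def)
  finally show ?thesis .
qed

lemma mat_integral_eq_0I:
  assumes "\<And>v. integral\<^sup>L (measure_of_real (quad_measure \<nu> v)) f = 0"
  shows "mat_integral \<nu> f = 0"
  using assms by (simp add: mat_integral_def qmeasure_eq_measure_of_real vec_eq_iff)

lemma Cset_pos_matrix_measure: "\<nu> \<in> Cset m \<phi> \<Longrightarrow> pos_matrix_measure \<nu>"
  by (simp add: Cset_def pos_matrix_measure_def)

lemma Cset_integral_quad_measure:
  assumes "\<nu> \<in> Cset m \<phi>" "bounded_borel_moments m \<phi>" "r \<in> {1..m}"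
  shows "integral\<^sup>L (measure_of_real (quad_measure \<nu> v)) (\<phi> r) = 0"
proof -
  obtain B where f: "\<phi> r \<in> borel_measurable borel" and B: "\<And>x. \<bar>\<phi> r x\<bar> \<le> B"
    using bounded_borel_momentsE[OF assms(2,3)] by blast
  have "mat_integral \<nu> (\<phi> r) = 0"
    using assms(1,3) by (simp add: Cset_def)
  then show ?thesis
    using integral_quad_measure[OF Cset_pos_matrix_measure[OF assms(1)] f B, of v] by simp
qed

lemma scalar_Cset_quad_measure:
  assumes "\<nu> \<in> Cset m \<phi>" "bounded_borel_moments m \<phi>" "cinner v v = 1"
  shows "scalar_Cset m \<phi> (quad_measure \<nu> v)"
proof -
  have "\<nu> UNIV = mat 1"
    using assms(1) by (simp add: Cset_def)
  then show ?thesis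
    using assms real_borel_measure_quad_measure[OF Cset_pos_matrix_measure[OF assms(1)]]
      Cset_integral_quad_measure[OF assms(1,2)]
    by (simp add: scalar_Cset_def quad_measure_def qform_cinner)
qed

lemma scaleR_complex: "r *\<^sub>R (z::complex) = complex_of_real r * z"
  by (simp add: scaleR_conv_of_real)

section \<open>Scalar measures as \<open>1 \<times> 1\<close> matrix measures\<close>

definition scalar_part :: "('a set \<Rightarrow> complex^1^1) \<Rightarrow> 'a set \<Rightarrow> real" where
  "scalar_part \<nu> A = Re (\<nu> A $ 1 $ 1)"

definition mat1_of :: "('a::topological_space set \<Rightarrow> real) \<Rightarrow> 'a set \<Rightarrow> complex^1^1" where
  "mat1_of \<nu> A = (\<chi> i j. complex_of_real (if A \<in> sets borel then \<nu> A else 0))"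

lemma qform_1x1: "qform w (M::complex^1^1) = complex_of_real ((cmod (w$1))\<^sup>2) * M$1$1"
proof -
  have "(UNIV::1 set) = {1}" by auto
  then have "qform w M = cnj (w$1) * w$1 * M$1$1"
    by (simp add: qform_def matrix_vector_mult_def mult_ac)
  also have "cnj (w$1) * w$1 = complex_of_real ((cmod (w$1))\<^sup>2)"
    using complex_norm_square[of "w$1"] by (simp only: mult.commute)
  finally show ?thesis .
qed

lemma scalar_part_eq_quad_measure: "scalar_part \<nu> = quad_measure \<nu> (axis 1 1)"
  by (simp add: fun_eq_iff scalar_part_def quad_measure_def qform_1x1 axis_def)

lemma Cset_1_entry:
  fixes \<nu> :: "'a::topological_space set \<Rightarrow> complex^1^1"
  assumes "\<nu> \<in> Cset m \<phi>"
  shows "\<nu> A $ 1 $ 1 = complex_of_real (scalar_part \<nu> A)"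
proof (cases "A \<in> sets borel")
  case True
  then have "psd_mat (\<nu> A)"
    using assms by (simp add: Cset_def)
  then have "qform (axis 1 1) (\<nu> A) \<in> \<real>"
    by (simp add: psd_mat_def)
  then show ?thesis
    by (simp add: qform_1x1 axis_def scalar_part_def complex_is_Real_iff complex_eq_iff)
next
  case False
  then show ?thesis
    using assms by (simp add: Cset_def matrix_measure_def scalar_part_def)
qed

lemma Cset_1_scalar_Cset:
  assumes "\<nu> \<in> Cset m \<phi>" and "bounded_borel_moments m \<phi>"
  shows "scalar_Cset m \<phi> (scalar_part (\<nu> :: 'a::topological_space set \<Rightarrow> complex^1^1))"
  unfolding scalar_part_eq_quad_measure
  by (rule scalar_Cset_quad_measure[OF assms]) (simp add: cinner_def axis_def)

lemma pos_matrix_measure_mat1_of: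
  assumes \<nu>: "real_borel_measure \<nu>"
  shows "pos_matrix_measure (mat1_of \<nu>)"
proof -
  have "linear (\<lambda>x::real. (\<chi> i j. complex_of_real x) :: complex^1^1)"
    by (intro linearI) (simp_all add: vec_eq_iff scaleR_complex)
  then have embed: "bounded_linear (\<lambda>x::real. (\<chi> i j. complex_of_real x) :: complex^1^1)"
    using linear_conv_bounded_linear by blast
  have "matrix_measure (mat1_of \<nu>)"
    unfolding matrix_measure_def
  proof safe
    fix A :: "'a set"
    assume "A \<notin> sets borel"
    then show "mat1_of \<nu> A = 0"
      by (simp add: mat1_of_def vec_eq_iff)
  next
    fix F :: "nat \<Rightarrow> 'a set"
    assume F: "range F \<subseteq> sets borel" "disjoint_family F"
    then have "(\<lambda>n. \<nu> (F n)) sums \<nu> (\<Union>n. F n)"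
      using \<nu> by (simp add: real_borel_measure_def real_borel_additive_def)
    from bounded_linear.sums[OF embed this]
    show "(\<lambda>n. mat1_of \<nu> (F n)) sums mat1_of \<nu> (\<Union>n. F n)"
      using F by (simp add: mat1_of_def subset_eq sets.countable_UN)
  qed
  moreover have "\<forall>A\<in>sets borel. psd_mat (mat1_of \<nu> A)"
    using \<nu> by (auto simp: psd_mat_def qform_1x1 mat1_of_def real_borel_measure_def)
  ultimately show ?thesis
    by (simp add: pos_matrix_measure_def)
qed

lemma mat1_of_Cset:
  fixes \<nu> :: "'a::topological_space set \<Rightarrow> real"
  assumes C: "scalar_Cset m \<phi> \<nu>" and \<phi>: "bounded_borel_moments m \<phi>"
  shows "mat1_of \<nu> \<in> Cset m \<phi>"
proof -
  have \<nu>: "real_borel_measure \<nu>" and \<nu>_UNIV: "\<nu> UNIV = 1"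
    and \<nu>_moments: "\<And>r. r \<in> {1..m} \<Longrightarrow> integral\<^sup>L (measure_of_real \<nu>) (\<phi> r) = 0"
    using C by (auto simp: scalar_Cset_def)
  have pos: "pos_matrix_measure (mat1_of \<nu>)"
    using \<nu> by (rule pos_matrix_measure_mat1_of)
  have quad: "quad_measure (mat1_of \<nu>) v A = (cmod (v$1))\<^sup>2 * \<nu> A" if "A \<in> sets borel" for v A
    using that by (simp add: quad_measure_def qform_1x1 mat1_of_def)
  have "mat_integral (mat1_of \<nu>) (\<phi> r) = 0" if r: "r \<in> {1..m}" for r
  proof (intro mat_integral_eq_0I)
    fix v :: "complex^1"
    obtain B where f: "\<phi> r \<in> borel_measurable borel" and B: "\<And>x. \<bar>\<phi> r x\<bar> \<le> B"
      using bounded_borel_momentsE[OF \<phi> r] by blast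
    have "integral\<^sup>L (measure_of_real (quad_measure (mat1_of \<nu>) v)) (\<phi> r)
        = (\<Sum>j\<in>{()}. (cmod (v$1))\<^sup>2 * integral\<^sup>L (measure_of_real \<nu>) (\<phi> r))"
      using \<nu> quad
      by (intro integral_measure_of_real_lincomb[OF _ real_borel_measure_quad_measure[OF pos] _ _ f B]) auto
    then show "integral\<^sup>L (measure_of_real (quad_measure (mat1_of \<nu>) v)) (\<phi> r) = 0"
      using \<nu>_moments[OF r] by simp
  qed
  moreover have "mat1_of \<nu> UNIV = mat 1"
    using \<nu>_UNIV by (simp add: mat1_of_def mat_def vec_eq_iff)
  ultimately show ?thesis
    using pos by (simp add: Cset_def pos_matrix_measure_def)
qed

lemma Cset_1_extreme_scalar:
  fixes \<nu> :: "'a::topological_space set \<Rightarrow> complex^1^1"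
  assumes ext: "extreme_point_mm \<nu> (Cset m \<phi>)" and \<phi>: "bounded_borel_moments m \<phi>"
  shows "scalar_Cset_extreme m \<phi> (scalar_part \<nu>)"
proof -
  have C: "\<nu> \<in> Cset m \<phi>"
    using ext by (simp add: extreme_point_mm_def)
  have "\<nu>1 A = \<nu>2 A"
    if C1: "scalar_Cset m \<phi> \<nu>1" and C2: "scalar_Cset m \<phi> \<nu>2" and t: "0 < t" "t < 1"
      and eq: "\<forall>A\<in>sets borel. scalar_part \<nu> A = t * \<nu>1 A + (1 - t) * \<nu>2 A"
      and A: "A \<in> sets borel" for \<nu>1 \<nu>2 t A
  proof -
    have "\<nu> = (\<lambda>A. t *\<^sub>R mat1_of \<nu>1 A + (1 - t) *\<^sub>R mat1_of \<nu>2 A)"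
    proof
      fix A
      show "\<nu> A = t *\<^sub>R mat1_of \<nu>1 A + (1 - t) *\<^sub>R mat1_of \<nu>2 A"
      proof (cases "A \<in> sets borel")
        case True
        then have "\<nu> A $ 1 $ 1 = complex_of_real (t * \<nu>1 A + (1 - t) * \<nu>2 A)"
          using eq Cset_1_entry[OF C, of A] by simp
        then show ?thesis
          using True by (simp add: vec_eq_iff mat1_of_def scaleR_complex forall_1)
      next
        case False
        then show ?thesis
          using C by (simp add: Cset_def matrix_measure_def mat1_of_def vec_eq_iff)
      qed
    qed
    then have "mat1_of \<nu>1 = mat1_of \<nu>2"
      using ext mat1_of_Cset[OF C1 \<phi>] mat1_of_Cset[OF C2 \<phi>] t
      unfolding extreme_point_mm_def by blast
    then have "mat1_of \<nu>1 A $ 1 $ 1 = mat1_of \<nu>2 A $ 1 $ 1"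
      by simp
    then show ?thesis
      using A by (simp add: mat1_of_def)
  qed
  then show ?thesis
    using Cset_1_scalar_Cset[OF C \<phi>] by (auto simp: scalar_Cset_extreme_def)
qed

section \<open>Diagonal measures with extreme scalar entries\<close>

text \<open>For \<open>|\<gamma>| = 1\<close> the measure \<open>(x + \<gamma> y)\<^sup>* \<nu> (x + \<gamma> y)\<close> is \<open>\<rho> + \<rho>' + 2 h\<close> with
  \<open>h = Re (\<gamma> x\<^sup>* \<nu> y)\<close>, and positivity of \<open>\<nu>\<close> makes \<open>h\<close> vanish where \<open>\<rho>\<close> does; taking
  \<open>\<gamma> = 1\<close> and \<open>\<gamma> = \<i>\<close> kills both parts of \<open>x\<^sup>* \<nu> y\<close>.\<close>

lemma Cset_off_diagonal_zero:
  fixes \<nu> :: "'a::topological_space set \<Rightarrow> complex^'n^'n"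
  assumes \<phi>: "bounded_borel_moments m \<phi>" and C: "\<nu> \<in> Cset m \<phi>"
    and ext: "scalar_Cset_extreme m \<phi> \<rho>" and C': "scalar_Cset m \<phi> \<rho>'"
    and x: "cinner x x = 1" and y: "cinner y y = 1" and xy: "cinner x y = 0"
    and diag_x: "\<And>B. B \<in> sets borel \<Longrightarrow> quad_measure \<nu> x B = \<rho> B"
    and diag_y: "\<And>B. B \<in> sets borel \<Longrightarrow> quad_measure \<nu> y B = \<rho>' B"
    and A: "A \<in> sets borel"
  shows "cinner x (\<nu> A *v y) = 0"
proof -
  have \<nu>: "pos_matrix_measure \<nu>"
    using C by (rule Cset_pos_matrix_measure)
  have psd: "\<And>A. A \<in> sets borel \<Longrightarrow> psd_mat (\<nu> A)"
    using \<nu> by (simp add: pos_matrix_measure_def)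
  have Re_zero: "Re (\<gamma> * cinner x (\<nu> A *v y)) = 0" if \<gamma>: "cnj \<gamma> * \<gamma> = 1" for \<gamma>
  proof (rule scalar_Cset_extreme_cross_term_zero[OF ext \<phi> C' _ _ _ _ _ A])
    let ?p = "quad_measure \<nu> (x + \<gamma> *s y)"
    show "real_borel_measure ?p"
      using \<nu> by (rule real_borel_measure_quad_measure)
    show "integral\<^sup>L (measure_of_real ?p) (\<phi> r) = 0" if "r \<in> {1..m}" for r
      using Cset_integral_quad_measure[OF C \<phi> that] .
    show "?p UNIV = 2"
      using C x y xy \<gamma> qform_add_scaled[of x \<gamma> y "mat 1"]
      by (simp add: Cset_def quad_measure_def qform_cinner cinner_commute[of y x])
    show "?p B = \<rho> B + \<rho>' B + 2 * Re (\<gamma> * cinner x (\<nu> B *v y))"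
      if "B \<in> sets borel" for B
    proof -
      have "Re (cnj \<gamma> * cinner y (\<nu> B *v x)) = Re (\<gamma> * cinner x (\<nu> B *v y))"
        using psd_mat_cinner_commute[OF psd[OF that], of y x] by (simp flip: complex_cnj_mult)
      then show ?thesis
        using \<gamma> diag_x[OF that] diag_y[OF that] by (simp add: quad_measure_def qform_add_scaled)
    qed
    show "Re (\<gamma> * cinner x (\<nu> B *v y)) = 0"
      if "B \<in> sets borel" "\<rho> B = 0" for B
    proof -
      have "qform x (\<nu> B) = 0"
        using that diag_x[OF that(1)] psd_mat_qform_real[OF psd[OF that(1)], of x]
        by (simp add: quad_measure_def)
      then show ?thesis
        using psd_mat_cinner_null[OF psd[OF that(1)]] by simp
    qed
  qed
  show ?thesis
    using Re_zero[of 1] Re_zero[of \<i>] by (simp add: complex_eq_iff)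
qed

text \<open>Here \<open>P k = u\<^sub>k u\<^sub>k\<^sup>*\<close> and \<open>\<rho> k\<close> is the scalar measure \<open>\<mu>\<^sub>k\<close> of the theorem.\<close>

locale diagonal_Cset_measure =
  fixes m :: nat and \<phi> :: "nat \<Rightarrow> 'a::topological_space \<Rightarrow> real"
    and u :: "'n::finite \<Rightarrow> complex^'n" and P :: "'n \<Rightarrow> complex^'n^'n"
    and \<rho> :: "'n \<Rightarrow> 'a set \<Rightarrow> real" and \<mu> :: "'a set \<Rightarrow> complex^'n^'n"
  assumes moments: "bounded_borel_moments m \<phi>"
    and basis: "orthonormal_basis u"
    and proj: "\<And>k x. P k *v x = cinner (u k) x *s u k"
    and extreme: "\<And>k. scalar_Cset_extreme m \<phi> (\<rho> k)"
    and non_borel: "\<And>k A. A \<notin> sets borel \<Longrightarrow> \<rho> k A = 0"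
    and \<mu>_eq: "\<And>A. \<mu> A = (\<Sum>k\<in>UNIV. cmat_scale (complex_of_real (\<rho> k A)) (P k))"
begin

lemma scalar_Cset: "scalar_Cset m \<phi> (\<rho> k)"
  using extreme by (simp add: scalar_Cset_extreme_def)

lemma real_borel_measure: "real_borel_measure (\<rho> k)"
  using scalar_Cset by (simp add: scalar_Cset_def)

lemma orthonormal: "cinner (u j) (u k) = (if j = k then 1 else 0)"
  using basis by (rule orthonormal_basis_cinner)

lemma \<mu>_apply: "\<mu> A *v x = (\<Sum>k\<in>UNIV. (complex_of_real (\<rho> k A) * cinner (u k) x) *s u k)"
  by (simp add: \<mu>_eq matrix_vector_mult_sum_left matrix_vector_mult_cmat_scale proj vector_smult_assoc)

lemma \<mu>_apply_basis: "\<mu> A *v u k = complex_of_real (\<rho> k A) *s u k"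
proof -
  have "\<mu> A *v u k = (\<Sum>j\<in>UNIV. if j = k then complex_of_real (\<rho> k A) *s u k else 0)"
    unfolding \<mu>_apply by (intro sum.cong) (auto simp: orthonormal)
  then show ?thesis by simp
qed

lemma qform_\<mu>: "qform v (\<mu> A) = complex_of_real (\<Sum>k\<in>UNIV. (cmod (cinner (u k) v))\<^sup>2 * \<rho> k A)"
proof -
  have "qform v (\<mu> A) = (\<Sum>k\<in>UNIV. complex_of_real (\<rho> k A) * (cinner (u k) v * cnj (cinner (u k) v)))"
    by (simp add: qform_cinner \<mu>_apply cinner_sum_right cinner_scale_right cinner_commute[of v] mult_ac)
  also have "\<dots> = complex_of_real (\<Sum>k\<in>UNIV. (cmod (cinner (u k) v))\<^sup>2 * \<rho> k A)"
    by (simp add: complex_norm_square[symmetric] mult_ac)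
  finally show ?thesis .
qed

lemma quad_measure_\<mu>: "quad_measure \<mu> v A = (\<Sum>k\<in>UNIV. (cmod (cinner (u k) v))\<^sup>2 * \<rho> k A)"
  by (simp add: quad_measure_def qform_\<mu>)

lemma matrix_measure_\<mu>: "matrix_measure \<mu>"
  unfolding matrix_measure_def
proof safe
  fix A :: "'a set"
  assume "A \<notin> sets borel"
  then show "\<mu> A = 0"
    by (simp add: \<mu>_eq non_borel cmat_scale_def vec_eq_iff)
next
  fix F :: "nat \<Rightarrow> 'a set"
  assume F: "range F \<subseteq> sets borel" "disjoint_family F"
  have "linear (\<lambda>r. cmat_scale (complex_of_real r) (P k))" for k
    by (intro linearI) (simp_all add: cmat_scale_def vec_eq_iff scaleR_complex distrib_right)
  then have linear: "bounded_linear (\<lambda>r. cmat_scale (complex_of_real r) (P k))" for k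
    using linear_conv_bounded_linear by blast
  have sums: "(\<lambda>n. \<rho> k (F n)) sums \<rho> k (\<Union>n. F n)" for k
    using real_borel_measure F by (simp add: real_borel_measure_def real_borel_additive_def)
  have "(\<lambda>n. \<Sum>k\<in>UNIV. cmat_scale (complex_of_real (\<rho> k (F n))) (P k))
      sums (\<Sum>k\<in>UNIV. cmat_scale (complex_of_real (\<rho> k (\<Union>n. F n))) (P k))"
    using bounded_linear.sums[OF linear sums] by (rule sums_sum)
  then show "(\<lambda>n. \<mu> (F n)) sums \<mu> (\<Union>n. F n)"
    by (simp add: \<mu>_eq)
qed

lemma psd_mat_\<mu>:
  assumes "A \<in> sets borel"
  shows "psd_mat (\<mu> A)"
proof -
  have "0 \<le> (\<Sum>k\<in>UNIV. (cmod (cinner (u k) v))\<^sup>2 * \<rho> k A)" for v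
    using real_borel_measure_nonneg[OF real_borel_measure assms] by (simp add: sum_nonneg)
  then show ?thesis
    by (simp add: psd_mat_def qform_\<mu>)
qed

lemma \<mu>_UNIV: "\<mu> UNIV = mat 1"
proof -
  have "\<mu> UNIV *v x = mat 1 *v x" for x
    using \<mu>_apply[of UNIV x] orthonormal_basis_expansion[OF basis] scalar_Cset
    by (simp add: scalar_Cset_def)
  then show ?thesis
    by (simp add: matrix_eq)
qed

lemma mat_integral_\<mu>:
  assumes r: "r \<in> {1..m}"
  shows "mat_integral \<mu> (\<phi> r) = 0"
proof (rule mat_integral_eq_0I)
  fix v
  obtain B where f: "\<phi> r \<in> borel_measurable borel" and B: "\<And>x. \<bar>\<phi> r x\<bar> \<le> B"
    using bounded_borel_momentsE[OF moments r] by blast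
  have "pos_matrix_measure \<mu>"
    using matrix_measure_\<mu> psd_mat_\<mu> by (simp add: pos_matrix_measure_def)
  then have "integral\<^sup>L (measure_of_real (quad_measure \<mu> v)) (\<phi> r)
      = (\<Sum>k\<in>UNIV. (cmod (cinner (u k) v))\<^sup>2 * integral\<^sup>L (measure_of_real (\<rho> k)) (\<phi> r))"
    by (intro integral_measure_of_real_lincomb[OF _ real_borel_measure_quad_measure
          real_borel_measure _ f B]) (auto simp: quad_measure_\<mu>)
  also have "\<dots> = 0"
    using scalar_Cset r by (simp add: scalar_Cset_def)
  finally show "integral\<^sup>L (measure_of_real (quad_measure \<mu> v)) (\<phi> r) = 0" .
qed

lemma \<mu>_in_Cset: "\<mu> \<in> Cset m \<phi>"
  using matrix_measure_\<mu> psd_mat_\<mu> \<mu>_UNIV mat_integral_\<mu> by (simp add: Cset_def)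

text \<open>The diagonal entries \<open>u\<^sub>k\<^sup>* \<nu> u\<^sub>k\<close> of a component \<open>\<nu>\<close> average to the extreme points
  \<open>\<rho>\<^sub>k\<close>, hence equal them; the off-diagonal entries then vanish.\<close>

lemma Cset_component_eq:
  assumes C1: "\<nu>1 \<in> Cset m \<phi>" and C2: "\<nu>2 \<in> Cset m \<phi>" and t: "0 < t" "t < 1"
    and eq: "\<mu> = (\<lambda>A. t *\<^sub>R \<nu>1 A + (1 - t) *\<^sub>R \<nu>2 A)"
  shows "\<nu>1 = \<mu>"
proof
  fix A
  show "\<nu>1 A = \<mu> A"
  proof (cases "A \<in> sets borel")
    case A: True
    have unit: "cinner (u k) (u k) = 1" for k
      by (simp add: orthonormal)
    have diag: "quad_measure \<nu>1 (u k) B = \<rho> k B" if "B \<in> sets borel" for k B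
    proof (rule scalar_Cset_extreme_convex_eq[OF extreme
          scalar_Cset_quad_measure[OF C1 moments unit] scalar_Cset_quad_measure[OF C2 moments unit] t _ that])
      fix B
      have "\<rho> k B = quad_measure \<mu> (u k) B"
        by (simp add: quad_measure_def qform_cinner \<mu>_apply_basis cinner_scale_right unit)
      then show "\<rho> k B = t * quad_measure \<nu>1 (u k) B + (1 - t) * quad_measure \<nu>2 (u k) B"
        by (simp add: eq quad_measure_def qform_add qform_scaleR)
    qed
    have "\<nu>1 A *v u k = \<mu> A *v u k" for k
    proof -
      have "cinner (u j) (\<nu>1 A *v u k) = 0" if "j \<noteq> k" for j
        using that A diag
        by (intro Cset_off_diagonal_zero[OF moments C1 extreme scalar_Cset]) (auto simp: orthonormal)
      then have "\<nu>1 A *v u k = cinner (u k) (\<nu>1 A *v u k) *s u k"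
        by (rule orthonormal_basis_eigenvector[OF basis])
      also have "cinner (u k) (\<nu>1 A *v u k) = complex_of_real (\<rho> k A)"
        using psd_mat_qform_real[of "\<nu>1 A" "u k"] diag[OF A] C1 A
        by (simp add: quad_measure_def Cset_def flip: qform_cinner)
      finally show ?thesis
        by (simp add: \<mu>_apply_basis)
    qed
    then show ?thesis
      by (rule orthonormal_basis_matrix_eqI[OF basis])
  next
    case False
    then show ?thesis
      using C1 by (simp add: Cset_def matrix_measure_def \<mu>_eq non_borel cmat_scale_def vec_eq_iff)
  qed
qed

lemma \<mu>_extreme: "extreme_point_mm \<mu> (Cset m \<phi>)"
  unfolding extreme_point_mm_def
proof (intro conjI \<mu>_in_Cset ballI allI impI)
  fix \<nu>1 \<nu>2 t
  assume C: "\<nu>1 \<in> Cset m \<phi>" "\<nu>2 \<in> Cset m \<phi>"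
    and eq: "0 < t \<and> t < 1 \<and> \<mu> = (\<lambda>A. t *\<^sub>R \<nu>1 A + (1 - t) *\<^sub>R \<nu>2 A)"
  then have "\<nu>1 = \<mu>"
    by (intro Cset_component_eq) auto
  moreover have "\<nu>2 = \<mu>"
    using C eq by (intro Cset_component_eq[of \<nu>2 \<nu>1 "1 - t"]) (auto simp: add.commute)
  ultimately show "\<nu>1 = \<nu>2"
    by simp
qed

end

theorem theorem3p14:
  fixes \<phi> :: "nat \<Rightarrow> 'a::t2_space \<Rightarrow> real" and m :: nat
    and P :: "'n::finite \<Rightarrow> complex^'n^'n"
    and \<mu>s :: "'n \<Rightarrow> 'a set \<Rightarrow> complex^1^1"
    and \<mu> :: "'a set \<Rightarrow> complex^'n^'n"
  assumes "compact (UNIV :: 'a set)"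
    and "\<forall>r\<in>{1..m}. continuous_on UNIV (\<phi> r)"
    and "\<forall>k. rank_one_orth_proj (P k)"
    and "\<forall>j k. j \<noteq> k \<longrightarrow> P j ** P k = 0"
    and "(\<Sum>k\<in>UNIV. P k) = mat 1"
    and "\<forall>k. extreme_point_mm (\<mu>s k) (Cset m \<phi>)"
    and "\<forall>A. \<mu> A = (\<Sum>k\<in>UNIV. cmat_scale (\<mu>s k A $ 1 $ 1) (P k))"
  shows "extreme_point_mm \<mu> (Cset m \<phi>)"
proof -
  have moments: "bounded_borel_moments m \<phi>"
    using assms(1,2) by (intro bounded_borel_moments_continuous) auto
  obtain u where basis: "orthonormal_basis u" and proj: "\<And>k x. P k *v x = cinner (u k) x *s u k"
    using orth_projections_orthonormal_basis[of P] assms(3-5) by blast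
  have C: "\<And>k. \<mu>s k \<in> Cset m \<phi>"
    using assms(6) by (simp add: extreme_point_mm_def)
  interpret diagonal_Cset_measure m \<phi> u P "\<lambda>k. scalar_part (\<mu>s k)" \<mu>
  proof
    show "scalar_Cset_extreme m \<phi> (scalar_part (\<mu>s k))" for k
      using Cset_1_extreme_scalar assms(6) moments by blast
    show "scalar_part (\<mu>s k) A = 0" if "A \<notin> sets borel" for k A
      using C[of k] that by (simp add: scalar_part_def Cset_def matrix_measure_def)
    show "\<mu> A = (\<Sum>k\<in>UNIV. cmat_scale (complex_of_real (scalar_part (\<mu>s k) A)) (P k))" for A
      using assms(7) by (simp add: Cset_1_entry[OF C])
  qed (use moments basis proj in auto)
  show ?thesis
    by (rule \<mu>_extreme)
qed

end
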